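(* Let $R$ be an integral domain of breadth at most $n$ (for some finite $n\ge1$), and let $\tilde{R}$ be the integral closure of $R$ in $\mathrm{Frac}(R)$. Then there are valuation rings $\mathcal{O}_1,\ldots,\mathcal{O}_m$ on $\mathrm{Frac}(R)$ with $\tilde{R}=\bigcap_{i=1}^m\mathcal{O}_i$. Moreover, $\tilde{R}$ and the $\mathcal{O}_i$ are definable subsets of $\mathrm{Frac}(R)$ (with $\mathrm{Frac}(R)$ interpreted in the ring $R$).
   Context: Rings are commutative and unital. The breadth $\mathrm{br}(R)$ satisfies $\mathrm{br}(R)\le n$ iff for any $x_1,\ldots,x_{n+1}\in R$ there is $i$ such that the ideal generated by $x_1,\ldots,x_{n+1}$ equals the ideal generated by $\{x_j:j\neq i\}$. Definable means definable with parameters in the language of rings. *)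

theory Defs
  imports "HOL-Computational_Algebra.Fraction_Field" "HOL-Computational_Algebra.Polynomial"
begin

definition gen_ideal :: "nat set \<Rightarrow> (nat \<Rightarrow> 'a::comm_ring_1) \<Rightarrow> 'a set" where
  "gen_ideal J x = {\<Sum>j\<in>J. c j * x j | c. True}"

definition breadth_le :: "'a::comm_ring_1 itself \<Rightarrow> nat \<Rightarrow> bool" where
  "breadth_le _ n \<longleftrightarrow>
     (\<forall>x :: nat \<Rightarrow> 'a. \<exists>i\<le>n. gen_ideal {..n} x = gen_ideal ({..n} - {i}) x)"

definition frac_embed :: "'a::idom \<Rightarrow> 'a fract" where
  "frac_embed a = Fraction_Field.Fract a 1"

definition integral_closure :: "'a::idom itself \<Rightarrow> 'a fract set" where
  "integral_closure _ =
     {z. \<exists>p :: 'a poly. lead_coeff p = 1 \<and> poly (map_poly frac_embed p) z = 0}"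

definition valuation_ring :: "'k::field set \<Rightarrow> bool" where
  "valuation_ring V \<longleftrightarrow>
     0 \<in> V \<and> 1 \<in> V \<and> (\<forall>x\<in>V. \<forall>y\<in>V. x + y \<in> V \<and> - x \<in> V \<and> x * y \<in> V) \<and>
     (\<forall>x. x \<noteq> 0 \<longrightarrow> x \<in> V \<or> inverse x \<in> V)"

datatype 'a rterm = RVar nat | RConst 'a | RZero | ROne
  | RAdd "'a rterm" "'a rterm" | RMinus "'a rterm" | RMul "'a rterm" "'a rterm"

datatype 'a rformula = FEq "'a rterm" "'a rterm" | FNot "'a rformula"
  | FConj "'a rformula" "'a rformula" | FEx nat "'a rformula"

primrec teval :: "(nat \<Rightarrow> 'a::comm_ring_1) \<Rightarrow> 'a rterm \<Rightarrow> 'a" where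
  "teval e (RVar k) = e k"
| "teval e (RConst c) = c"
| "teval e RZero = 0"
| "teval e ROne = 1"
| "teval e (RAdd s t) = teval e s + teval e t"
| "teval e (RMinus s) = - teval e s"
| "teval e (RMul s t) = teval e s * teval e t"

primrec sat :: "(nat \<Rightarrow> 'a::comm_ring_1) \<Rightarrow> 'a rformula \<Rightarrow> bool" where
  "sat e (FEq s t) \<longleftrightarrow> teval e s = teval e t"
| "sat e (FNot f) \<longleftrightarrow> \<not> sat e f"
| "sat e (FConj f g) \<longleftrightarrow> sat e f \<and> sat e g"
| "sat e (FEx k f) \<longleftrightarrow> (\<exists>a. sat (e(k := a)) f)"

text \<open>A binary relation on R definable (with parameters, given as constants) in R,
  with the two free variables 0 and 1.\<close>
definition definable2 :: "('a::comm_ring_1 \<Rightarrow> 'a \<Rightarrow> bool) \<Rightarrow> bool" where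
  "definable2 P \<longleftrightarrow> (\<exists>\<phi>. \<forall>a b. P a b \<longleftrightarrow> sat ((\<lambda>_. 0)(0 := a, 1 := b)) \<phi>)"

text \<open>Frac(R) is interpreted in R as pairs (a,b) with b \<noteq> 0 modulo (a,b)~(c,d) iff ad = bc.\<close>
definition frac_definable :: "'a::idom fract set \<Rightarrow> bool" where
  "frac_definable S \<longleftrightarrow> definable2 (\<lambda>a b. b \<noteq> 0 \<and> Fraction_Field.Fract a b \<in> S)"

end

theory Submission
  imports Defs "Jordan_Normal_Form.Char_Poly"
begin

(* Let K be the fraction field of R and S the integral closure of R in K. A subring of K that is
   maximal among those containing R[1/z] but not z is a valuation ring (Krull), so S is the
   intersection of the minimal valuation rings of K containing R.

   Breadth at most n passes to R-submodules of K: every finitely generated one is generated by n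
   elements. Applied to R[z] for integral z, this makes z an eigenvalue of an n x n matrix over R,
   so z satisfies a monic equation of degree exactly n, and one formula defines S.

   Minimal valuation rings are pairwise incomparable. By approximation, any n + 1 of them
   O_0, ..., O_n admit c_i in the maximal ideal of O_i and outside every other O_j; breadth
   applied to the 1 / c_i puts some 1 / c_i into the maximal ideal of O_i, which is absurd. So
   there are at most n of them. Finally each minimal O is defined from S with a parameter c as
   above: z is in O iff s z is in S for some s in S such that (1 + c) / (s + c) is a unit of S. *)

section \<open>Subrings and valuation rings of a field\<close>

definition subring :: "'k::field set \<Rightarrow> bool" where
  "subring V \<longleftrightarrow> 0 \<in> V \<and> 1 \<in> V \<and> (\<forall>x\<in>V. \<forall>y\<in>V. x + y \<in> V \<and> - x \<in> V \<and> x * y \<in> V)"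

definition unit_in :: "'k::field set \<Rightarrow> 'k \<Rightarrow> bool" where
  "unit_in V u \<longleftrightarrow> u \<noteq> 0 \<and> u \<in> V \<and> inverse u \<in> V"

definition nonunits :: "'k::field set \<Rightarrow> 'k set" where
  "nonunits V = {u \<in> V. \<not> unit_in V u}"

lemma valuation_ring_iff:
  "valuation_ring V \<longleftrightarrow> subring V \<and> (\<forall>x. x \<noteq> 0 \<longrightarrow> x \<in> V \<or> inverse x \<in> V)"
  by (auto simp: valuation_ring_def subring_def)

lemma valuation_ring_subring: "valuation_ring V \<Longrightarrow> subring V"
  by (simp add: valuation_ring_iff)

context
  fixes V :: "'k::field set"
  assumes V: "subring V"
begin

lemma subring_zero [simp]: "0 \<in> V"
  using V by (simp add: subring_def)

lemma subring_one [simp]: "1 \<in> V"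
  using V by (simp add: subring_def)

lemma subring_add [intro]: "x \<in> V \<Longrightarrow> y \<in> V \<Longrightarrow> x + y \<in> V"
  using V by (simp add: subring_def)

lemma subring_mult [intro]: "x \<in> V \<Longrightarrow> y \<in> V \<Longrightarrow> x * y \<in> V"
  using V by (simp add: subring_def)

lemma subring_uminus_iff [simp]: "- x \<in> V \<longleftrightarrow> x \<in> V"
  using V unfolding subring_def by (metis minus_minus)

lemma subring_diff [intro]: "x \<in> V \<Longrightarrow> y \<in> V \<Longrightarrow> x - y \<in> V"
  using subring_add[of x "- y"] by simp

lemma subring_power [intro]: "x \<in> V \<Longrightarrow> x ^ k \<in> V"
  by (induct k) auto

lemma subring_sum [intro]: "(\<And>i. i \<in> A \<Longrightarrow> f i \<in> V) \<Longrightarrow> sum f A \<in> V"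
  by (induct A rule: infinite_finite_induct) auto

lemma unit_in_mult: "unit_in V a \<Longrightarrow> unit_in V b \<Longrightarrow> unit_in V (a * b)"
  by (auto simp: unit_in_def)

lemma unit_in_inverse: "unit_in V a \<Longrightarrow> unit_in V (inverse a)"
  by (auto simp: unit_in_def)

lemma notin_mult_unit: "x \<notin> V \<Longrightarrow> unit_in V u \<Longrightarrow> x * u \<notin> V"
  by (metis nonzero_mult_div_cancel_right subring_mult divide_inverse unit_in_def)

lemma nonunits_subset: "nonunits V \<subseteq> V"
  by (auto simp: nonunits_def)

lemma zero_in_nonunits [simp]: "0 \<in> nonunits V"
  by (simp add: nonunits_def unit_in_def)

lemma one_notin_nonunits [simp]: "1 \<notin> nonunits V"
  by (simp add: nonunits_def unit_in_def)

lemma unit_in_if_notin_nonunits: "x \<in> V \<Longrightarrow> x \<notin> nonunits V \<Longrightarrow> unit_in V x"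
  by (simp add: nonunits_def)

lemma inverse_notin_if_nonunit: "x \<in> nonunits V \<Longrightarrow> x \<noteq> 0 \<Longrightarrow> inverse x \<notin> V"
  by (auto simp: nonunits_def unit_in_def)

end

context
  fixes V :: "'k::field set"
  assumes V: "valuation_ring V"
begin

private lemma subring: "subring V"
  using V by (rule valuation_ring_subring)

private lemmas subring_closed [simp, intro] =
  subring_zero[OF subring] subring_one[OF subring] subring_add[OF subring]
  subring_mult[OF subring] subring_uminus_iff[OF subring]
  zero_in_nonunits[OF subring] one_notin_nonunits[OF subring]

lemma inverse_in_nonunits_if_notin:
  assumes x: "x \<notin> V"
  shows "inverse x \<in> nonunits V"
proof -
  have "x \<noteq> 0"
    using x by auto
  then have "inverse x \<in> V"
    using V x by (auto simp: valuation_ring_def)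
  then show ?thesis
    using x by (simp add: nonunits_def unit_in_def)
qed

lemma nonunits_mult_right: "x \<in> nonunits V \<Longrightarrow> v \<in> V \<Longrightarrow> x * v \<in> nonunits V"
proof (rule ccontr)
  assume x: "x \<in> nonunits V" and v: "v \<in> V" and "x * v \<notin> nonunits V"
  then have u: "unit_in V (x * v)"
    using nonunits_subset[OF subring] unit_in_if_notin_nonunits[OF subring] by blast
  then have "inverse x = v * inverse (x * v)"
    by (auto simp: unit_in_def field_simps)
  also have "\<dots> \<in> V"
    using u v by (auto simp: unit_in_def)
  finally show False
    using x u by (auto simp: nonunits_def unit_in_def)
qed

lemma nonunits_mult_left: "x \<in> nonunits V \<Longrightarrow> v \<in> V \<Longrightarrow> v * x \<in> nonunits V"
  by (metis nonunits_mult_right mult.commute)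

lemma nonunits_uminus: "x \<in> nonunits V \<Longrightarrow> - x \<in> nonunits V"
  using nonunits_mult_right[of x "- 1"] subring by simp

lemma nonunits_add:
  assumes x: "x \<in> nonunits V" and y: "y \<in> nonunits V"
  shows "x + y \<in> nonunits V"
proof -
  \<comment> \<open>factor out the summand that divides the other one\<close>
  have main: "a + b \<in> nonunits V"
    if a: "a \<in> nonunits V" and "a \<noteq> 0" and "b / a \<in> V" for a b
  proof -
    have "a + b = a * (1 + b / a)"
      using \<open>a \<noteq> 0\<close> by (simp add: field_simps)
    then show ?thesis
      using nonunits_mult_right[OF a] \<open>b / a \<in> V\<close> by auto
  qed
  show ?thesis
  proof (cases "x = 0 \<or> y = 0")
    case True
    then show ?thesis using x y by auto
  next
    case False
    then have "y / x \<in> V \<or> x / y \<in> V"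
      using V by (auto simp: valuation_ring_def dest: spec[of _ "y / x"])
    then show ?thesis
      using main[OF x, of y] main[OF y, of x] False by (auto simp: add.commute)
  qed
qed

lemma nonunits_diff: "x \<in> nonunits V \<Longrightarrow> y \<in> nonunits V \<Longrightarrow> x - y \<in> nonunits V"
  using nonunits_add[of x "- y"] nonunits_uminus[of y] by simp

lemma nonunits_sum: "(\<And>i. i \<in> A \<Longrightarrow> f i \<in> nonunits V) \<Longrightarrow> sum f A \<in> nonunits V"
  by (induct A rule: infinite_finite_induct) (auto intro: nonunits_add)

lemma nonunits_power: "x \<in> nonunits V \<Longrightarrow> d \<ge> 1 \<Longrightarrow> x ^ d \<in> nonunits V"
proof (induct d)
  case (Suc d)
  then show ?case
    using nonunits_subset[OF subring]
    by (cases "d = 0") (auto intro: nonunits_mult_right simp: mult.commute)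
qed simp

lemma unit_in_one_plus_nonunit:
  assumes t: "t \<in> nonunits V"
  shows "unit_in V (1 + t)"
proof (rule unit_in_if_notin_nonunits[OF subring])
  show "1 + t \<in> V"
    using t nonunits_subset[OF subring] by auto
  show "1 + t \<notin> nonunits V"
    using nonunits_diff[of "1 + t" t] t by auto
qed

lemma unit_in_add_nonunit: "unit_in V u \<Longrightarrow> t \<in> nonunits V \<Longrightarrow> unit_in V (u + t)"
proof -
  assume u: "unit_in V u" and t: "t \<in> nonunits V"
  have "unit_in V (1 + t * inverse u)"
    using nonunits_mult_right[OF t] u by (intro unit_in_one_plus_nonunit) (auto simp: unit_in_def)
  moreover have "u + t = u * (1 + t * inverse u)"
    using u by (simp add: unit_in_def field_simps)
  ultimately show ?thesis
    using unit_in_mult[OF subring u] by simp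
qed

lemma power_notin: "x \<notin> V \<Longrightarrow> d \<ge> 1 \<Longrightarrow> x ^ d \<notin> V"
  using nonunits_power[OF inverse_in_nonunits_if_notin, of x d]
    inverse_notin_if_nonunit[OF subring, of "inverse x ^ d"] subring_zero[OF subring]
  by (auto simp: power_inverse)

end

section \<open>Integral elements of the fraction field\<close>

interpretation frac_embed: inj_idom_hom "frac_embed :: 'a::idom \<Rightarrow> 'a fract"
proof
  fix x y :: 'a
  show "frac_embed 0 = 0"
    by (simp add: frac_embed_def fract_collapse)
  show "frac_embed (x + y) = frac_embed x + frac_embed y"
    by (simp add: frac_embed_def)
  show "frac_embed (x * y) = frac_embed x * frac_embed y"
    by (simp add: frac_embed_def)
  show "frac_embed 1 = 1"
    by (simp add: frac_embed_def fract_collapse)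
  show "frac_embed x = 0 \<Longrightarrow> x = 0"
    by (simp add: frac_embed_def Zero_fract_def eq_fract)
qed

interpretation frac_embed_poly: map_poly_inj_idom_hom "frac_embed :: 'a::idom \<Rightarrow> 'a fract" ..

declare frac_embed.hom_add [simp] frac_embed.hom_mult [simp] frac_embed.hom_uminus [simp]
  frac_embed.hom_minus [simp] frac_embed.hom_power [simp]

lemma Fract_eq_frac_embed_divide: "b \<noteq> 0 \<Longrightarrow> Fraction_Field.Fract a b = frac_embed a / frac_embed b"
  by (simp add: frac_embed_def eq_fract)

definition base_ring :: "'a::idom fract set" where
  "base_ring = range frac_embed"

lemma frac_embed_in_base_ring [simp]: "frac_embed a \<in> base_ring"
  by (simp add: base_ring_def)

lemma subring_base_ring: "subring (base_ring :: 'a::idom fract set)"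
  unfolding subring_def base_ring_def
proof (intro conjI ballI)
  show "0 \<in> range frac_embed" "1 \<in> range frac_embed"
    by (metis frac_embed.hom_zero frac_embed.hom_one rangeI)+
  fix x y :: "'a fract"
  assume "x \<in> range frac_embed" "y \<in> range frac_embed"
  then obtain a b where "x = frac_embed a" "y = frac_embed b"
    by blast
  then show "x + y \<in> range frac_embed" "- x \<in> range frac_embed" "x * y \<in> range frac_embed"
    by (metis frac_embed.hom_add frac_embed.hom_uminus frac_embed.hom_mult rangeI)+
qed

lemma base_ring_choice:
  assumes "\<forall>j. r j \<in> base_ring"
  obtains c where "\<And>j. r j = frac_embed (c j)"
proof -
  from assms have "\<forall>j. \<exists>a. r j = frac_embed a"
    by (auto simp: base_ring_def)
  then show thesis
    using that by metis
qed

definition integral_of_degree :: "nat \<Rightarrow> 'a::idom fract \<Rightarrow> bool" where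
  "integral_of_degree n z \<longleftrightarrow> (\<exists>c. (\<forall>j. c j \<in> base_ring) \<and> z ^ n = (\<Sum>j<n. c j * z ^ j))"

lemma integral_of_degree_iff_monic_root:
  "integral_of_degree n z \<longleftrightarrow>
     (\<exists>p :: 'a::idom poly. lead_coeff p = 1 \<and> degree p = n \<and> poly (map_poly frac_embed p) z = 0)"
proof
  assume "integral_of_degree n z"
  then obtain r where r: "\<forall>j. r j \<in> base_ring" "z ^ n = (\<Sum>j<n. r j * z ^ j)"
    by (auto simp: integral_of_degree_def)
  obtain c where c: "\<And>j. r j = frac_embed (c j)"
    using base_ring_choice[OF r(1)] by blast
  define p :: "'a poly" where "p = monom 1 n - (\<Sum>j<n. monom (c j) j)"
  have coeff_p: "coeff p i = (if i = n then 1 else if i < n then - c i else 0)" for i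
    by (auto simp: p_def coeff_sum)
  have degree_p: "degree p = n"
    by (intro antisym degree_le le_degree) (auto simp: coeff_p)
  have "poly (map_poly frac_embed p) z = (\<Sum>i\<le>n. frac_embed (coeff p i) * z ^ i)"
    by (simp add: poly_altdef degree_p)
  also have "\<dots> = z ^ n - (\<Sum>i<n. r i * z ^ i)"
    by (simp add: lessThan_Suc_atMost[symmetric] coeff_p c sum_negf)
  finally have "poly (map_poly frac_embed p) z = 0"
    using r(2) by simp
  moreover have "lead_coeff p = 1"
    using degree_p coeff_p by simp
  ultimately show "\<exists>p. lead_coeff p = 1 \<and> degree p = n \<and> poly (map_poly frac_embed p) z = 0"
    using degree_p by blast
next
  assume "\<exists>p :: 'a poly. lead_coeff p = 1 \<and> degree p = n \<and> poly (map_poly frac_embed p) z = 0"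
  then obtain p :: "'a poly" where p: "lead_coeff p = 1" "degree p = n"
    "poly (map_poly frac_embed p) z = 0"
    by blast
  have "0 = (\<Sum>i\<le>n. frac_embed (coeff p i) * z ^ i)"
    using p(2,3) by (simp add: poly_altdef)
  also have "\<dots> = (\<Sum>i<n. frac_embed (coeff p i) * z ^ i) + z ^ n"
    using p(1,2) by (simp add: lessThan_Suc_atMost[symmetric])
  finally have "z ^ n = (\<Sum>j<n. frac_embed (- coeff p j) * z ^ j)"
    by (simp add: sum_negf eq_neg_iff_add_eq_0 add.commute)
  then show "integral_of_degree n z"
    unfolding integral_of_degree_def by (metis frac_embed_in_base_ring)
qed

lemma integral_closure_iff: "z \<in> integral_closure TYPE('a::idom) \<longleftrightarrow> (\<exists>n. integral_of_degree n z)"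
  by (auto simp: integral_closure_def integral_of_degree_iff_monic_root)

lemma zero_in_integral_closure: "0 \<in> integral_closure TYPE('a::idom)"
  unfolding integral_closure_iff integral_of_degree_def
  using subring_zero[OF subring_base_ring] by (intro exI[of _ 1] exI[of _ "\<lambda>_. 0"]) simp

lemma integral_of_degree_mono:
  assumes "integral_of_degree m z" and "m \<le> n"
  shows "integral_of_degree n z"
proof -
  obtain p :: "'a::idom poly" where p: "lead_coeff p = 1" "degree p = m"
    "poly (map_poly frac_embed p) z = 0"
    using assms(1) by (auto simp: integral_of_degree_iff_monic_root)
  define q where "q = monom 1 (n - m) * p"
  have "p \<noteq> 0"
    using p(1) by auto
  then have "degree q = n"
    using p(2) assms(2) by (simp add: q_def degree_mult_eq degree_monom_eq)
  moreover have "lead_coeff q = 1"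
    using p(1) by (simp add: q_def lead_coeff_mult lead_coeff_monom degree_monom_eq)
  moreover have "poly (map_poly frac_embed q) z = 0"
    using p(3) by (simp add: q_def frac_embed_poly.hom_mult poly_monom)
  ultimately show ?thesis
    unfolding integral_of_degree_iff_monic_root by blast
qed

lemma integral_closure_subset_valuation_ring:
  assumes V: "valuation_ring V" and R: "base_ring \<subseteq> V"
  shows "integral_closure TYPE('a::idom) \<subseteq> V"
proof
  fix z assume "z \<in> integral_closure TYPE('a)"
  then obtain n c where c: "\<forall>j. c j \<in> base_ring" "z ^ n = (\<Sum>j<n. c j * z ^ j)"
    by (auto simp: integral_closure_iff integral_of_degree_def)
  show "z \<in> V"
  proof (rule ccontr)
    assume z: "z \<notin> V"
    then have "z \<noteq> 0"
      using subring_zero[OF valuation_ring_subring[OF V]] by auto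
    \<comment> \<open>divide the equation by \<open>z ^ n\<close>: then \<open>1\<close> lies in the maximal ideal\<close>
    define y where "y = inverse z"
    have y: "y \<in> nonunits V"
      unfolding y_def using inverse_in_nonunits_if_notin[OF V z] .
    have "1 = z ^ n * y ^ n"
      using \<open>z \<noteq> 0\<close> by (simp add: y_def power_inverse[symmetric] field_simps)
    also have "\<dots> = (\<Sum>j<n. c j * y ^ (n - j))"
      unfolding c(2) sum_distrib_right
    proof (rule sum.cong[OF refl])
      fix j assume "j \<in> {..<n}"
      then have "y ^ n = y ^ j * y ^ (n - j)"
        by (simp add: power_add[symmetric])
      then show "c j * z ^ j * y ^ n = c j * y ^ (n - j)"
        using \<open>z \<noteq> 0\<close> by (simp add: y_def power_inverse[symmetric] field_simps)
    qed
    also have "\<dots> \<in> nonunits V"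
    proof (rule nonunits_sum[OF V])
      fix j assume "j \<in> {..<n}"
      then have "y ^ (n - j) \<in> nonunits V"
        by (intro nonunits_power[OF V y]) simp
      moreover have "c j \<in> V"
        using c(1) R by blast
      ultimately show "c j * y ^ (n - j) \<in> nonunits V"
        by (rule nonunits_mult_left[OF V])
    qed
    finally show False
      using one_notin_nonunits[OF valuation_ring_subring[OF V]] by simp
  qed
qed

section \<open>Krull's theorem: valuation rings avoiding a non-integral element\<close>

definition adjoin :: "'k::field set \<Rightarrow> 'k \<Rightarrow> 'k set" where
  "adjoin B y = {poly p y | p. \<forall>i. coeff p i \<in> B}"

context
  fixes B :: "'k::field set"
  assumes B: "subring B"
begin

lemma subring_adjoin: "subring (adjoin B y)"
  unfolding subring_def adjoin_def
proof (intro conjI ballI)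
  show "0 \<in> {poly p y |p. \<forall>i. coeff p i \<in> B}"
    using subring_zero[OF B] by (auto intro!: exI[of _ 0])
  show "1 \<in> {poly p y |p. \<forall>i. coeff p i \<in> B}"
    using subring_zero[OF B] subring_one[OF B] by (auto simp: coeff_1 intro!: exI[of _ 1])
  fix u v assume "u \<in> {poly p y |p. \<forall>i. coeff p i \<in> B}" "v \<in> {poly p y |p. \<forall>i. coeff p i \<in> B}"
  then obtain p q where p: "\<forall>i. coeff p i \<in> B" "u = poly p y"
    and q: "\<forall>i. coeff q i \<in> B" "v = poly q y"
    by auto
  show "u + v \<in> {poly p y |p. \<forall>i. coeff p i \<in> B}"
    using p q by (auto intro!: exI[of _ "p + q"] subring_add[OF B])
  show "- u \<in> {poly p y |p. \<forall>i. coeff p i \<in> B}"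
    using p B by (auto intro!: exI[of _ "- p"])
  show "u * v \<in> {poly p y |p. \<forall>i. coeff p i \<in> B}"
    using p q
    by (auto simp: coeff_mult intro!: exI[of _ "p * q"] subring_sum[OF B] subring_mult[OF B])
qed

lemma subset_adjoin: "B \<subseteq> adjoin B y"
proof
  fix b assume "b \<in> B"
  then have "\<forall>i. coeff [:b:] i \<in> B"
    using B by (simp add: coeff_pCons split: nat.splits)
  then show "b \<in> adjoin B y"
    unfolding adjoin_def by (auto intro!: exI[of _ "[:b:]"])
qed

lemma in_adjoin: "y \<in> adjoin B y"
proof -
  have "\<forall>i. coeff (monom 1 1) i \<in> B"
    using B by (simp add: coeff_monom)
  then show ?thesis
    unfolding adjoin_def by (intro CollectI exI[of _ "monom 1 1"]) (simp add: poly_monom)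
qed

end

lemma power_degree_mult_poly_inverse:
  fixes s :: "'k::field"
  assumes "s \<noteq> 0"
  shows "s ^ degree p * poly p (inverse s) = (\<Sum>i\<le>degree p. coeff p i * s ^ (degree p - i))"
  unfolding poly_altdef sum_distrib_left
proof (rule sum.cong[OF refl])
  fix i assume "i \<in> {..degree p}"
  then have "s ^ degree p = s ^ (degree p - i) * s ^ i"
    by (simp add: power_add[symmetric])
  then show "s ^ degree p * (coeff p i * inverse s ^ i) = coeff p i * s ^ (degree p - i)"
    using assms by (simp add: power_inverse[symmetric] field_simps)
qed

lemma sum_coeff_power_eq_poly_inverse:
  fixes y :: "'k::field"
  assumes "y \<noteq> 0" and "degree Q \<le> p" and "poly Q (inverse y) = 1"
  shows "(\<Sum>j\<in>{1..degree Q}. coeff Q j * y ^ (p - j)) = y ^ p * (1 - coeff Q 0)"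
proof -
  have "1 = (\<Sum>j\<le>degree Q. coeff Q j * inverse y ^ j)"
    using assms(3) by (simp add: poly_altdef)
  also have "{..degree Q} = insert 0 {1..degree Q}"
    by auto
  finally have "1 - coeff Q 0 = (\<Sum>j\<in>{1..degree Q}. coeff Q j * inverse y ^ j)"
    by (simp add: algebra_simps)
  then have "y ^ p * (1 - coeff Q 0) = (\<Sum>j\<in>{1..degree Q}. y ^ p * (coeff Q j * inverse y ^ j))"
    by (simp add: sum_distrib_left)
  also have "\<dots> = (\<Sum>j\<in>{1..degree Q}. coeff Q j * y ^ (p - j))"
  proof (rule sum.cong[OF refl])
    fix j assume "j \<in> {1..degree Q}"
    then have "y ^ p = y ^ (p - j) * y ^ j"
      using assms(2) by (simp add: power_add[symmetric])
    then show "y ^ p * (coeff Q j * inverse y ^ j) = coeff Q j * y ^ (p - j)"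
      using assms(1) by (simp add: power_inverse[symmetric] field_simps)
  qed
  finally show ?thesis ..
qed

lemma not_integral_notin_adjoin_inverse:
  assumes z: "z \<notin> integral_closure TYPE('a::idom)"
  shows "z \<notin> adjoin base_ring (inverse z)"
proof
  assume "z \<in> adjoin base_ring (inverse z)"
  then obtain p where p: "\<forall>i. coeff p i \<in> base_ring" "z = poly p (inverse z)"
    unfolding adjoin_def by blast
  have "z \<noteq> 0"
    using z zero_in_integral_closure by auto
  define N where "N = degree p"
  \<comment> \<open>\<open>z = p(1/z)\<close> is an integral equation for \<open>z\<close> of degree \<open>N + 1\<close>, with reversed coefficients\<close>
  have "z ^ Suc N = z ^ N * z"
    by (rule power_Suc2)
  also have "\<dots> = z ^ N * poly p (inverse z)"
    by (rule arg_cong[where f = "\<lambda>t. z ^ N * t"]) (rule p(2))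
  also have "\<dots> = (\<Sum>i\<le>N. coeff p i * z ^ (N - i))"
    unfolding N_def by (rule power_degree_mult_poly_inverse[OF \<open>z \<noteq> 0\<close>])
  also have "\<dots> = (\<Sum>i\<le>N. coeff p (N - i) * z ^ i)"
    by (rule sum.reindex_bij_witness[of _ "\<lambda>i. N - i" "\<lambda>i. N - i"]) auto
  also have "\<dots> = (\<Sum>i<Suc N. coeff p (N - i) * z ^ i)"
    by (simp add: lessThan_Suc_atMost)
  finally have "integral_of_degree (Suc N) z"
    unfolding integral_of_degree_def using p(1) by (intro exI[of _ "\<lambda>i. coeff p (N - i)"]) auto
  then show False
    using z by (auto simp: integral_closure_iff)
qed

(* If x and 1 / x both lay outside B, maximality would give z in B[x] and in B[1 / x], that is,
   relations 1 = P(x) = Q(1 / x) with coefficients in the ideal inverse z * B; the relation of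
   larger degree can be shortened with the other one, so descent on the degrees is absurd. *)

context
  fixes z :: "'k::field" and B :: "'k set"
  assumes z: "z \<noteq> 0" and B: "subring B" and inverse_z: "inverse z \<in> B" and z_notin: "z \<notin> B"
    and maximal: "\<And>y. z \<notin> adjoin B y \<Longrightarrow> y \<in> B"
begin

definition inv_ideal :: "'k set" where
  "inv_ideal = (\<lambda>b. inverse z * b) ` B"

lemma inv_idealE:
  assumes "c \<in> inv_ideal"
  obtains b where "b \<in> B" "c = inverse z * b"
  using assms by (auto simp: inv_ideal_def)

lemma inv_ideal_subset: "inv_ideal \<subseteq> B"
  using subring_mult[OF B] inverse_z by (auto simp: inv_ideal_def)

lemma zero_in_inv_ideal: "0 \<in> inv_ideal"
  using subring_zero[OF B] by (auto simp: inv_ideal_def intro!: image_eqI[of _ _ 0])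

lemma one_notin_inv_ideal: "1 \<notin> inv_ideal"
proof
  assume "1 \<in> inv_ideal"
  then obtain b where "b \<in> B" "1 = inverse z * b"
    by (rule inv_idealE)
  then show False
    using z z_notin by (simp add: field_simps)
qed

lemma inv_ideal_add: "c \<in> inv_ideal \<Longrightarrow> d \<in> inv_ideal \<Longrightarrow> c + d \<in> inv_ideal"
  using subring_add[OF B] by (auto simp: inv_ideal_def distrib_left[symmetric] intro!: imageI)

lemma inv_ideal_diff: "c \<in> inv_ideal \<Longrightarrow> d \<in> inv_ideal \<Longrightarrow> c - d \<in> inv_ideal"
  using subring_diff[OF B] by (auto simp: inv_ideal_def right_diff_distrib[symmetric] intro!: imageI)

lemma inv_ideal_mult: "c \<in> inv_ideal \<Longrightarrow> b \<in> B \<Longrightarrow> b * c \<in> inv_ideal"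
  using subring_mult[OF B] by (auto simp: inv_ideal_def mult.left_commute intro!: imageI)

lemma inv_ideal_sum: "(\<And>i. i \<in> A \<Longrightarrow> f i \<in> inv_ideal) \<Longrightarrow> sum f A \<in> inv_ideal"
  by (induct A rule: infinite_finite_induct) (auto intro: inv_ideal_add zero_in_inv_ideal)

lemma power_one_minus_inv_ideal:
  assumes "c \<in> inv_ideal"
  shows "\<exists>d\<in>inv_ideal. (1 - c) ^ k = 1 - d"
proof (induct k)
  case 0
  show ?case
    using zero_in_inv_ideal by force
next
  case (Suc k)
  then obtain d where d: "d \<in> inv_ideal" "(1 - c) ^ k = 1 - d"
    by blast
  have "(1 - c) ^ Suc k = (1 - d) * (1 - c)"
    using d(2) by (simp add: mult.commute)
  also have "\<dots> = 1 - (d + c - c * d)"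
    by (simp add: algebra_simps)
  finally have "(1 - c) ^ Suc k = 1 - (d + c - c * d)" .
  moreover have "d + c - c * d \<in> inv_ideal"
    using assms d(1) inv_ideal_subset
    by (intro inv_ideal_diff inv_ideal_add inv_ideal_mult) auto
  ultimately show ?case
    by blast
qed

lemma inverse_one_minus_inv_ideal:
  assumes c: "c \<in> inv_ideal"
  shows "1 - c \<noteq> 0" and "inverse (1 - c) \<in> B"
proof -
  show "1 - c \<noteq> 0"
    using c one_notin_inv_ideal by auto
  then have s: "1 - c \<noteq> 0" .
  have "z \<notin> adjoin B (inverse (1 - c))"
  proof
    assume "z \<in> adjoin B (inverse (1 - c))"
    then obtain p where p: "\<forall>i. coeff p i \<in> B" "z = poly p (inverse (1 - c))"
      by (auto simp: adjoin_def)
    define N where "N = degree p"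
    obtain d where d: "d \<in> inv_ideal" "(1 - c) ^ N = 1 - d"
      using power_one_minus_inv_ideal[OF c] by blast
    obtain b where b: "b \<in> B" "d = inverse z * b"
      using d(1) by (rule inv_idealE)
    \<comment> \<open>clearing denominators in \<open>z = p(1/(1 - c))\<close> gives \<open>z - b \<in> B\<close>\<close>
    have "z - b = z * (1 - c) ^ N"
      using z by (simp add: d(2) b(2) field_simps)
    also have "\<dots> = (\<Sum>i\<le>N. coeff p i * (1 - c) ^ (N - i))"
      using power_degree_mult_poly_inverse[OF s, of p] p(2) by (simp add: N_def mult.commute)
    also have "\<dots> \<in> B"
      using p(1) c inv_ideal_subset subring_one[OF B]
      by (intro subring_sum[OF B] subring_mult[OF B] subring_power[OF B] subring_diff[OF B]) auto
    finally have "z - b + b \<in> B"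
      using b(1) by (rule subring_add[OF B])
    then show False
      using z_notin by simp
  qed
  then show "inverse (1 - c) \<in> B"
    by (rule maximal)
qed

definition one_eq_ideal_poly :: "'k \<Rightarrow> nat \<Rightarrow> bool" where
  "one_eq_ideal_poly y d \<longleftrightarrow> (\<exists>P. degree P = d \<and> (\<forall>i. coeff P i \<in> inv_ideal) \<and> poly P y = 1)"

lemma one_eq_ideal_poly_pos:
  assumes "one_eq_ideal_poly y d"
  shows "d \<ge> 1"
proof (rule ccontr)
  assume "\<not> d \<ge> 1"
  then have "d = 0"
    by simp
  then obtain P where P: "degree P = 0" "\<forall>i. coeff P i \<in> inv_ideal" "poly P y = 1"
    using assms unfolding one_eq_ideal_poly_def by blast
  then have "coeff P 0 = 1"
    by (simp add: poly_altdef)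
  then show False
    using P(2) one_notin_inv_ideal by metis
qed

lemma one_eq_ideal_poly_if_in_adjoin:
  assumes "z \<in> adjoin B y"
  shows "\<exists>d. one_eq_ideal_poly y d"
proof -
  obtain P where P: "\<forall>i. coeff P i \<in> B" "z = poly P y"
    using assms by (auto simp: adjoin_def)
  have "poly (Polynomial.smult (inverse z) P) y = 1"
    using P(2) z by simp
  moreover have "\<forall>i. coeff (Polynomial.smult (inverse z) P) i \<in> inv_ideal"
    using P(1) by (auto simp: inv_ideal_def)
  ultimately show ?thesis
    unfolding one_eq_ideal_poly_def by blast
qed

lemma one_eq_ideal_poly_replace_lead:
  assumes P: "degree P = p" "p \<ge> 1" "\<forall>i. coeff P i \<in> inv_ideal" "poly P y = 1"
    and R: "degree R < p" "\<forall>i. coeff R i \<in> inv_ideal" "poly R y = lead_coeff P * y ^ p"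
  shows "\<exists>p' < p. one_eq_ideal_poly y p'"
proof -
  define P' where "P' = P - monom (lead_coeff P) p + R"
  have coeff_P': "coeff P' i = coeff P i - (if i = p then lead_coeff P else 0) + coeff R i" for i
    by (simp add: P'_def coeff_monom)
  have "degree P' \<le> p - 1"
  proof (rule degree_le, intro allI impI)
    fix i assume "p - 1 < i"
    then have "p \<le> i"
      using P(2) by simp
    then have "coeff R i = 0" and "i = p \<or> coeff P i = 0"
      using R(1) P(1) by (auto intro: coeff_eq_0)
    then show "coeff P' i = 0"
      using P(1) by (auto simp: coeff_P')
  qed
  moreover have "poly P' y = 1"
    using P(1,4) R(3) by (simp add: P'_def poly_monom)
  moreover have "coeff P' i \<in> inv_ideal" for i
    using P(3) R(2) zero_in_inv_ideal unfolding coeff_P'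
    by (intro inv_ideal_add inv_ideal_diff) auto
  ultimately show ?thesis
    using P(2) unfolding one_eq_ideal_poly_def by (intro exI[of _ "degree P'"]) auto
qed

lemma one_eq_ideal_poly_reduce:
  assumes y: "y \<noteq> 0" and p: "one_eq_ideal_poly y p" and q: "one_eq_ideal_poly (inverse y) q"
    and "q \<le> p"
  shows "\<exists>p' < p. one_eq_ideal_poly y p'"
proof -
  obtain P where P: "degree P = p" "\<forall>i. coeff P i \<in> inv_ideal" "poly P y = 1"
    using p by (auto simp: one_eq_ideal_poly_def)
  obtain Q where Q: "degree Q = q" "\<forall>i. coeff Q i \<in> inv_ideal" "poly Q (inverse y) = 1"
    using q by (auto simp: one_eq_ideal_poly_def)
  have "p \<ge> 1"
    using one_eq_ideal_poly_pos[OF p] .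
  define c where "c = coeff Q"
  define a where "a = lead_coeff P"
  define u where "u = inverse (1 - c 0)"
  have c: "c j \<in> inv_ideal" for j
    using Q(2) by (simp add: c_def)
  have "u \<in> B"
    using inverse_one_minus_inv_ideal(2)[OF c] by (simp add: u_def)
  moreover have "a \<in> B"
    using P(2) inv_ideal_subset by (auto simp: a_def)
  ultimately have "u * a \<in> B"
    by (rule subring_mult[OF B])
  \<comment> \<open>\<open>Q(1/y) = 1\<close> lets us rewrite \<open>a y^p\<close> as a combination of lower powers of \<open>y\<close>\<close>
  have lower: "(\<Sum>j\<in>{1..q}. c j * y ^ (p - j)) = y ^ p * (1 - c 0)"
    using sum_coeff_power_eq_poly_inverse[OF y _ Q(3)] Q(1) \<open>q \<le> p\<close> by (simp add: c_def)
  have "(\<Sum>j\<in>{1..q}. u * a * c j * y ^ (p - j)) = u * a * (\<Sum>j\<in>{1..q}. c j * y ^ (p - j))"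
    by (simp add: sum_distrib_left mult.assoc)
  also have "\<dots> = a * y ^ p * (u * (1 - c 0))"
    unfolding lower by (simp add: ac_simps)
  also have "u * (1 - c 0) = 1"
    using inverse_one_minus_inv_ideal(1)[OF c] by (simp add: u_def)
  finally have key: "(\<Sum>j\<in>{1..q}. u * a * c j * y ^ (p - j)) = a * y ^ p"
    by simp
  define R where "R = (\<Sum>j\<in>{1..q}. monom (u * a * c j) (p - j))"
  have coeff_R: "coeff R i = (\<Sum>j\<in>{1..q}. if p - j = i then u * a * c j else 0)" for i
    by (simp add: R_def coeff_sum coeff_monom)
  show ?thesis
  proof (rule one_eq_ideal_poly_replace_lead[OF P(1) \<open>p \<ge> 1\<close> P(2,3)])
    have "degree R \<le> p - 1"
      using \<open>p \<ge> 1\<close> by (intro degree_le) (auto simp: coeff_R intro!: sum.neutral)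
    then show "degree R < p"
      using \<open>p \<ge> 1\<close> by simp
    show "\<forall>i. coeff R i \<in> inv_ideal"
      using inv_ideal_mult[OF c \<open>u * a \<in> B\<close>] zero_in_inv_ideal
      unfolding coeff_R by (auto intro!: inv_ideal_sum simp: mult.commute)
    show "poly R y = lead_coeff P * y ^ p"
      using key by (simp add: R_def a_def poly_sum poly_monom)
  qed
qed

lemma not_one_eq_ideal_poly_both:
  assumes "x \<noteq> 0" "one_eq_ideal_poly x p" "one_eq_ideal_poly (inverse x) q"
  shows False
  using assms(2,3)
proof (induct "p + q" arbitrary: p q rule: less_induct)
  case less
  consider "q \<le> p" | "p < q"
    by linarith
  then show False
  proof cases
    case 1
    then obtain p' where "p' < p" "one_eq_ideal_poly x p'"
      using one_eq_ideal_poly_reduce[OF assms(1)] less.prems by blast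
    then show False
      using less.hyps[of p' q] less.prems by auto
  next
    case 2
    then obtain q' where "q' < q" "one_eq_ideal_poly (inverse x) q'"
      using one_eq_ideal_poly_reduce[of "inverse x" q p] assms(1) less.prems by auto
    then show False
      using less.hyps[of p q'] less.prems by auto
  qed
qed

lemma valuation_ring_if_maximal: "valuation_ring B"
  unfolding valuation_ring_iff
proof (intro conjI allI impI B)
  fix x :: 'k assume "x \<noteq> 0"
  show "x \<in> B \<or> inverse x \<in> B"
  proof (rule ccontr)
    assume "\<not> (x \<in> B \<or> inverse x \<in> B)"
    then obtain p q where "one_eq_ideal_poly x p" "one_eq_ideal_poly (inverse x) q"
      using maximal one_eq_ideal_poly_if_in_adjoin by blast
    then show False
      by (rule not_one_eq_ideal_poly_both[OF \<open>x \<noteq> 0\<close>])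
  qed
qed

end

lemma subring_Union_chain:
  assumes "C \<noteq> {}" and "\<And>X. X \<in> C \<Longrightarrow> subring X"
    and chain: "\<And>X Y. X \<in> C \<Longrightarrow> Y \<in> C \<Longrightarrow> X \<subseteq> Y \<or> Y \<subseteq> X"
  shows "subring (\<Union>C)"
  unfolding subring_def
proof (intro conjI ballI)
  obtain X0 where "X0 \<in> C"
    using assms(1) by blast
  moreover have "0 \<in> X0" "1 \<in> X0"
    using assms(2)[OF \<open>X0 \<in> C\<close>] by simp_all
  ultimately show "0 \<in> \<Union>C" "1 \<in> \<Union>C"
    by blast+
  fix x y assume "x \<in> \<Union>C" "y \<in> \<Union>C"
  then obtain X Y where XY: "X \<in> C" "Y \<in> C" "x \<in> X" "y \<in> Y"
    by blast
  obtain Z where Z: "Z \<in> C" "x \<in> Z" "y \<in> Z"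
    using chain[OF XY(1,2)] XY by blast
  have Z_subring: "subring Z"
    using assms(2)[OF Z(1)] .
  have "- x \<in> Z" "x + y \<in> Z" "x * y \<in> Z"
    using Z(2,3) Z_subring by auto
  then show "- x \<in> \<Union>C" "x + y \<in> \<Union>C" "x * y \<in> \<Union>C"
    using Z(1) by blast+
qed

lemma exists_maximal_subring_notin:
  fixes A :: "'k::field set"
  assumes A: "subring A" "z \<notin> A"
  shows "\<exists>B. subring B \<and> A \<subseteq> B \<and> z \<notin> B \<and> (\<forall>y. z \<notin> adjoin B y \<longrightarrow> y \<in> B)"
proof -
  define F where "F = {B. subring B \<and> A \<subseteq> B \<and> z \<notin> B}"
  have "\<exists>M\<in>F. \<forall>X\<in>F. M \<subseteq> X \<longrightarrow> X = M"
  proof (rule subset_Zorn_nonempty)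
    show "F \<noteq> {}"
      using A by (auto simp: F_def)
    fix C assume "C \<noteq> {}" "subset.chain F C"
    then have "subring (\<Union>C)"
      by (intro subring_Union_chain) (auto simp: subset_chain_def F_def)
    then show "\<Union>C \<in> F"
      using \<open>C \<noteq> {}\<close> \<open>subset.chain F C\<close> by (auto simp: subset_chain_def F_def)
  qed
  then obtain M where "M \<in> F" and max: "\<And>X. X \<in> F \<Longrightarrow> M \<subseteq> X \<Longrightarrow> X = M"
    by blast
  then have M: "subring M" "A \<subseteq> M" "z \<notin> M"
    by (simp_all add: F_def)
  have "y \<in> M" if "z \<notin> adjoin M y" for y
  proof -
    have "adjoin M y \<in> F"
      using that M subring_adjoin[OF M(1)] subset_adjoin[OF M(1)] by (auto simp: F_def)
    then have "adjoin M y = M"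
      using max subset_adjoin[OF M(1)] by blast
    then show "y \<in> M"
      using in_adjoin[OF M(1), of y] by simp
  qed
  then show ?thesis
    using M by blast
qed

theorem exists_valuation_ring_notin:
  assumes z: "z \<notin> integral_closure TYPE('a::idom)"
  obtains V where "valuation_ring V" "base_ring \<subseteq> V" "z \<notin> V"
proof -
  have "z \<noteq> 0"
    using z zero_in_integral_closure by auto
  let ?A = "adjoin base_ring (inverse z)"
  obtain B where B: "subring B" "?A \<subseteq> B" "z \<notin> B" "\<forall>y. z \<notin> adjoin B y \<longrightarrow> y \<in> B"
    using exists_maximal_subring_notin[OF subring_adjoin[OF subring_base_ring]
        not_integral_notin_adjoin_inverse[OF z]] by blast
  have "inverse z \<in> B"
    using B(2) in_adjoin[OF subring_base_ring, of "inverse z"] by blast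
  have "base_ring \<subseteq> B"
    using B(2) subset_adjoin[OF subring_base_ring, of "inverse z"] by blast
  have "valuation_ring B"
    by (rule valuation_ring_if_maximal[OF \<open>z \<noteq> 0\<close> B(1) \<open>inverse z \<in> B\<close> B(3) B(4)[rule_format]])
  then show thesis
    using that \<open>base_ring \<subseteq> B\<close> B(3) by blast
qed

section \<open>Minimal valuation rings over the base ring\<close>

lemma subring_Inter:
  fixes C :: "'k::field set set"
  shows "(\<And>V. V \<in> C \<Longrightarrow> subring V) \<Longrightarrow> subring (\<Inter>C)"
  unfolding subring_def by blast

lemma valuation_ring_Inter_chain:
  fixes C :: "'k::field set set"
  assumes vr: "\<And>V. V \<in> C \<Longrightarrow> valuation_ring V"
    and chain: "\<And>V W. V \<in> C \<Longrightarrow> W \<in> C \<Longrightarrow> V \<subseteq> W \<or> W \<subseteq> V"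
  shows "valuation_ring (\<Inter>C)"
  unfolding valuation_ring_iff
proof (intro conjI allI impI)
  show "subring (\<Inter>C)"
    using vr valuation_ring_subring by (blast intro: subring_Inter)
  fix x :: 'k assume "x \<noteq> 0"
  show "x \<in> \<Inter>C \<or> inverse x \<in> \<Inter>C"
  proof (cases "x \<in> \<Inter>C")
    case False
    then obtain V0 where V0: "V0 \<in> C" "x \<notin> V0"
      by auto
    have "inverse x \<in> V" if V: "V \<in> C" for V
    proof (cases "V \<subseteq> V0")
      case True
      then have "x \<notin> V"
        using V0(2) by blast
      then show ?thesis
        using vr[OF V] \<open>x \<noteq> 0\<close> unfolding valuation_ring_def by blast
    next
      case False
      then have "V0 \<subseteq> V"
        using chain[OF V V0(1)] by auto
      moreover have "inverse x \<in> V0"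
        using vr[OF V0(1)] V0(2) \<open>x \<noteq> 0\<close> unfolding valuation_ring_def by blast
      ultimately show ?thesis
        by auto
    qed
    then show ?thesis
      by blast
  qed simp
qed

lemma exists_minimal_subset:
  fixes G :: "'a set set"
  assumes "X0 \<in> G"
    and Inter: "\<And>C. C \<noteq> {} \<Longrightarrow> C \<subseteq> G \<Longrightarrow> (\<And>X Y. X \<in> C \<Longrightarrow> Y \<in> C \<Longrightarrow> X \<subseteq> Y \<or> Y \<subseteq> X)
      \<Longrightarrow> \<Inter>C \<in> G"
  shows "\<exists>M\<in>G. M \<subseteq> X0 \<and> (\<forall>X\<in>G. X \<subseteq> M \<longrightarrow> X = M)"
proof -
  define A where "A = {X \<in> G. X \<subseteq> X0}"
  have "\<exists>M\<in>A. \<forall>X\<in>A. M \<supseteq> X \<longrightarrow> X = M"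
  proof (rule predicate_Zorn)
    show "partial_order_on A (relation_of (\<lambda>X Y. X \<supseteq> Y) A)"
      by (rule partial_order_on_relation_ofI) auto
    fix C assume C: "C \<in> Chains (relation_of (\<lambda>X Y. X \<supseteq> Y) A)"
    show "\<exists>U\<in>A. \<forall>X\<in>C. X \<supseteq> U"
    proof (cases "C = {}")
      case True
      then show ?thesis
        using \<open>X0 \<in> G\<close> unfolding A_def by blast
    next
      case False
      have "C \<subseteq> A"
        using Chains_relation_of[OF C] .
      then have "C \<subseteq> G" and "\<Inter>C \<subseteq> X0"
        using False unfolding A_def by blast+
      have "X \<subseteq> Y \<or> Y \<subseteq> X" if "X \<in> C" "Y \<in> C" for X Y
        using C that unfolding Chains_def relation_of_def by blast
      then have "\<Inter>C \<in> G"
        by (rule Inter[OF False \<open>C \<subseteq> G\<close>])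
      then show ?thesis
        using \<open>\<Inter>C \<subseteq> X0\<close> unfolding A_def by blast
    qed
  qed
  then obtain M where M: "M \<in> A" and min: "\<forall>X\<in>A. M \<supseteq> X \<longrightarrow> X = M"
    by blast
  have "X = M" if "X \<in> G" "X \<subseteq> M" for X
  proof -
    have "X \<in> A"
      using that M unfolding A_def by auto
    then show ?thesis
      using min that(2) by blast
  qed
  then show ?thesis
    using M unfolding A_def by blast
qed

definition min_valuation_rings :: "'a::idom fract set set" where
  "min_valuation_rings = {V. valuation_ring V \<and> base_ring \<subseteq> V \<and>
     (\<forall>W. valuation_ring W \<and> base_ring \<subseteq> W \<and> W \<subseteq> V \<longrightarrow> W = V)}"

lemma min_valuation_ringsD:
  assumes "V \<in> min_valuation_rings"
  shows "valuation_ring V" and "base_ring \<subseteq> V"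
  using assms by (simp_all add: min_valuation_rings_def)

lemma min_valuation_rings_incomparable:
  assumes "V \<in> min_valuation_rings" "W \<in> min_valuation_rings" "V \<noteq> W"
  shows "\<not> V \<subseteq> W"
  using assms by (auto simp: min_valuation_rings_def)

lemma exists_min_valuation_ring_subset:
  assumes "valuation_ring V0" "base_ring \<subseteq> V0"
  shows "\<exists>V\<in>min_valuation_rings. V \<subseteq> V0"
proof -
  have "\<exists>M\<in>{V. valuation_ring V \<and> base_ring \<subseteq> V}. M \<subseteq> V0 \<and>
      (\<forall>X\<in>{V. valuation_ring V \<and> base_ring \<subseteq> V}. X \<subseteq> M \<longrightarrow> X = M)"
  proof (rule exists_minimal_subset)
    show "V0 \<in> {V. valuation_ring V \<and> base_ring \<subseteq> V}"
      using assms by simp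
    fix C :: "'a fract set set"
    assume "C \<noteq> {}" "C \<subseteq> {V. valuation_ring V \<and> base_ring \<subseteq> V}"
      and "\<And>X Y. X \<in> C \<Longrightarrow> Y \<in> C \<Longrightarrow> X \<subseteq> Y \<or> Y \<subseteq> X"
    then show "\<Inter>C \<in> {V. valuation_ring V \<and> base_ring \<subseteq> V}"
      using valuation_ring_Inter_chain[of C] by auto
  qed
  then show ?thesis
    by (auto simp: min_valuation_rings_def)
qed

theorem integral_closure_eq_Inter_min_valuation_rings:
  "integral_closure TYPE('a::idom) = \<Inter>min_valuation_rings"
proof
  show "integral_closure TYPE('a) \<subseteq> \<Inter>min_valuation_rings"
    using integral_closure_subset_valuation_ring min_valuation_ringsD by blast
  show "\<Inter>min_valuation_rings \<subseteq> integral_closure TYPE('a)"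
  proof
    fix z assume z: "z \<in> \<Inter>(min_valuation_rings :: 'a fract set set)"
    show "z \<in> integral_closure TYPE('a)"
    proof (rule ccontr)
      assume "z \<notin> integral_closure TYPE('a)"
      then obtain V where "valuation_ring V" "base_ring \<subseteq> V" "z \<notin> V"
        by (rule exists_valuation_ring_notin)
      then show False
        using exists_min_valuation_ring_subset z by blast
    qed
  qed
qed

section \<open>Breadth and finitely generated submodules of the fraction field\<close>

definition base_span :: "nat set \<Rightarrow> (nat \<Rightarrow> 'a::idom fract) \<Rightarrow> 'a fract set" where
  "base_span J y = {\<Sum>j\<in>J. r j * y j | r. \<forall>j. r j \<in> base_ring}"

lemma zero_in_base_span: "0 \<in> base_span J y"
  unfolding base_span_def using subring_zero[OF subring_base_ring]
  by (intro CollectI exI[of _ "\<lambda>j. 0"]) auto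

lemma base_span_add: "u \<in> base_span J y \<Longrightarrow> v \<in> base_span J y \<Longrightarrow> u + v \<in> base_span J y"
proof -
  assume "u \<in> base_span J y" "v \<in> base_span J y"
  then obtain r s where r: "\<forall>j. r j \<in> base_ring" "u = (\<Sum>j\<in>J. r j * y j)"
    and s: "\<forall>j. s j \<in> base_ring" "v = (\<Sum>j\<in>J. s j * y j)"
    by (auto simp: base_span_def)
  have "u + v = (\<Sum>j\<in>J. (r j + s j) * y j)"
    by (simp add: r s sum.distrib distrib_right)
  then show ?thesis
    unfolding base_span_def using r s subring_add[OF subring_base_ring]
    by (intro CollectI exI[of _ "\<lambda>j. r j + s j"]) auto
qed

lemma base_span_mult: "s \<in> base_ring \<Longrightarrow> u \<in> base_span J y \<Longrightarrow> s * u \<in> base_span J y"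
proof -
  assume s: "s \<in> base_ring" and "u \<in> base_span J y"
  then obtain r where r: "\<forall>j. r j \<in> base_ring" "u = (\<Sum>j\<in>J. r j * y j)"
    by (auto simp: base_span_def)
  have "s * u = (\<Sum>j\<in>J. (s * r j) * y j)"
    by (simp add: r sum_distrib_left mult.assoc)
  then show ?thesis
    unfolding base_span_def using r s subring_mult[OF subring_base_ring]
    by (intro CollectI exI[of _ "\<lambda>j. s * r j"]) auto
qed

lemma base_span_sum:
  "(\<And>i. i \<in> I \<Longrightarrow> v i \<in> base_span J y) \<Longrightarrow> (\<And>i. s i \<in> base_ring) \<Longrightarrow>
     (\<Sum>i\<in>I. s i * v i) \<in> base_span J y"
  by (induct I rule: infinite_finite_induct)
    (auto intro: base_span_add base_span_mult zero_in_base_span)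

lemma generator_in_base_span: "finite J \<Longrightarrow> j \<in> J \<Longrightarrow> y j \<in> base_span J y"
proof -
  assume J: "finite J" "j \<in> J"
  have "(\<Sum>k\<in>J. (if k = j then 1 else 0) * y k) = y j"
    using J by (simp add: if_distrib[of "\<lambda>x. x * _"] cong: if_cong)
  then show ?thesis
    unfolding base_span_def using subring_zero[OF subring_base_ring] subring_one[OF subring_base_ring]
    by (intro CollectI exI[of _ "\<lambda>k. if k = j then 1 else 0"]) auto
qed

lemma base_span_cong: "(\<And>j. j \<in> J \<Longrightarrow> g j = h j) \<Longrightarrow> base_span J g = base_span J h"
  unfolding base_span_def by (metis (no_types, lifting) sum.cong)

lemma base_span_Suc:
  "base_span {..<Suc N} g = {u + r * g N | u r. u \<in> base_span {..<N} g \<and> r \<in> base_ring}"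
proof (rule Set.set_eqI, rule iffI)
  fix v assume "v \<in> base_span {..<Suc N} g"
  then show "v \<in> {u + r * g N | u r. u \<in> base_span {..<N} g \<and> r \<in> base_ring}"
    by (auto simp: base_span_def)
next
  fix v assume "v \<in> {u + r * g N | u r. u \<in> base_span {..<N} g \<and> r \<in> base_ring}"
  then obtain r r0 where r: "\<forall>j. r j \<in> base_ring" "r0 \<in> base_ring"
    "v = (\<Sum>j<N. r j * g j) + r0 * g N"
    by (auto simp: base_span_def)
  then have "v = (\<Sum>j<Suc N. (r(N := r0)) j * g j)"
    by simp
  then show "v \<in> base_span {..<Suc N} g"
    unfolding base_span_def using r(1,2) by (intro CollectI exI[of _ "r(N := r0)"]) auto
qed

lemma frac_embed_divide_cases:
  obtains a b where "b \<noteq> 0" "z = frac_embed a / frac_embed b"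
  by (cases z) (simp add: Fract_eq_frac_embed_divide)

lemma in_base_span_iff_gen_ideal:
  fixes y :: "nat \<Rightarrow> 'a::idom fract"
  assumes "d \<noteq> 0" and dy: "\<And>j. j \<in> J \<Longrightarrow> frac_embed d * y j = frac_embed (x j)"
  shows "u \<in> base_span J y \<longleftrightarrow> frac_embed d * u \<in> frac_embed ` gen_ideal J x"
proof
  assume "u \<in> base_span J y"
  then obtain r where r: "\<forall>j. r j \<in> base_ring" "u = (\<Sum>j\<in>J. r j * y j)"
    by (auto simp: base_span_def)
  obtain c where c: "\<And>j. r j = frac_embed (c j)"
    using base_ring_choice[OF r(1)] by blast
  have "frac_embed d * u = (\<Sum>j\<in>J. frac_embed (c j) * (frac_embed d * y j))"
    by (simp add: r(2) c sum_distrib_left mult.left_commute)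
  also have "\<dots> = frac_embed (\<Sum>j\<in>J. c j * x j)"
    by (simp add: dy frac_embed.hom_sum)
  finally show "frac_embed d * u \<in> frac_embed ` gen_ideal J x"
    by (auto simp: gen_ideal_def)
next
  assume "frac_embed d * u \<in> frac_embed ` gen_ideal J x"
  then obtain c where "frac_embed d * u = frac_embed (\<Sum>j\<in>J. c j * x j)"
    by (auto simp: gen_ideal_def)
  also have "\<dots> = (\<Sum>j\<in>J. frac_embed (c j) * (frac_embed d * y j))"
    by (simp add: dy frac_embed.hom_sum)
  also have "\<dots> = frac_embed d * (\<Sum>j\<in>J. frac_embed (c j) * y j)"
    by (simp add: sum_distrib_left mult.left_commute)
  finally have "u = (\<Sum>j\<in>J. frac_embed (c j) * y j)"
    using \<open>d \<noteq> 0\<close> by simp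
  then show "u \<in> base_span J y"
    unfolding base_span_def by (intro CollectI exI[of _ "\<lambda>j. frac_embed (c j)"]) auto
qed

lemma breadth_le_base_span:
  assumes "breadth_le TYPE('a::idom) n"
  shows "\<exists>i\<le>n. base_span {..n} y = base_span ({..n} - {i}) (y :: nat \<Rightarrow> 'a fract)"
proof -
  have "\<forall>j. \<exists>a b. b \<noteq> 0 \<and> y j = frac_embed a / frac_embed b"
    by (meson frac_embed_divide_cases)
  then obtain a b where ab: "\<And>j. b j \<noteq> (0::'a)" "\<And>j. y j = frac_embed (a j) / frac_embed (b j)"
    by metis
  define d where "d = prod b {..n}"
  define x where "x = (\<lambda>j. a j * prod b ({..n} - {j}))"
  have "d \<noteq> 0"
    using ab(1) by (simp add: d_def)
  have dy: "frac_embed d * y j = frac_embed (x j)" if "j \<in> {..n}" for j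
  proof -
    have "d = b j * prod b ({..n} - {j})"
      using that by (simp add: d_def prod.remove)
    then show ?thesis
      using ab(1)[of j] by (simp add: ab(2) x_def field_simps)
  qed
  obtain i where "i \<le> n" "gen_ideal {..n} x = gen_ideal ({..n} - {i}) x"
    using assms unfolding breadth_le_def by blast
  moreover have "base_span {..n} y = base_span ({..n} - {i}) y"
    using in_base_span_iff_gen_ideal[OF \<open>d \<noteq> 0\<close>, of "{..n}" y x]
      in_base_span_iff_gen_ideal[OF \<open>d \<noteq> 0\<close>, of "{..n} - {i}" y x] dy calculation(2)
    by auto
  ultimately show ?thesis
    by blast
qed

definition skip :: "nat \<Rightarrow> nat \<Rightarrow> nat" where
  "skip i j = (if j < i then j else Suc j)"

lemma bij_betw_skip: "i \<le> n \<Longrightarrow> bij_betw (skip i) {..<n} ({..n} - {i})"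
proof (rule bij_betw_imageI)
  show "inj_on (skip i) {..<n}"
    by (auto simp: inj_on_def skip_def split: if_splits)
  assume "i \<le> n"
  show "skip i ` {..<n} = {..n} - {i}"
  proof (rule Set.set_eqI, rule iffI)
    fix x assume "x \<in> skip i ` {..<n}"
    then show "x \<in> {..n} - {i}"
      by (auto simp: skip_def)
  next
    fix x assume x: "x \<in> {..n} - {i}"
    show "x \<in> skip i ` {..<n}"
    proof (cases "x < i")
      case True
      then show ?thesis
        using \<open>i \<le> n\<close> by (auto simp: skip_def intro!: image_eqI[of _ _ x])
    next
      case False
      then have "x = skip i (x - 1)" "x - 1 < n"
        using x by (auto simp: skip_def)
      then show ?thesis
        by blast
    qed
  qed
qed

lemma base_span_remove_eq_skip:
  assumes "i \<le> n"
  shows "base_span ({..n} - {i}) y = base_span {..<n} (\<lambda>j. y (skip i j))"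
proof -
  have reindex: "(\<Sum>j\<in>{..n} - {i}. r j * y j) = (\<Sum>j<n. r (skip i j) * y (skip i j))" for r
    using sum.reindex_bij_betw[OF bij_betw_skip[OF assms], of "\<lambda>j. r j * y j"] by simp
  define unskip where "unskip = (\<lambda>j. if j < i then j else j - 1)"
  have unskip: "unskip (skip i j) = j" for j
    by (simp add: unskip_def skip_def)
  show ?thesis
  proof (rule Set.set_eqI, rule iffI)
    fix v assume "v \<in> base_span ({..n} - {i}) y"
    then obtain r where "\<forall>j. r j \<in> base_ring" "v = (\<Sum>j\<in>{..n} - {i}. r j * y j)"
      by (auto simp: base_span_def)
    then show "v \<in> base_span {..<n} (\<lambda>j. y (skip i j))"
      unfolding base_span_def reindex by (intro CollectI exI[of _ "\<lambda>j. r (skip i j)"]) auto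
  next
    fix v assume "v \<in> base_span {..<n} (\<lambda>j. y (skip i j))"
    then obtain r where r: "\<forall>j. r j \<in> base_ring" "v = (\<Sum>j<n. r j * y (skip i j))"
      by (auto simp: base_span_def)
    have "v = (\<Sum>j\<in>{..n} - {i}. r (unskip j) * y j)"
      unfolding reindex unskip r(2) ..
    then show "v \<in> base_span ({..n} - {i}) y"
      unfolding base_span_def using r(1) by (intro CollectI exI[of _ "\<lambda>j. r (unskip j)"]) auto
  qed
qed

lemma base_span_fewer_generators:
  assumes "breadth_le TYPE('a::idom) n"
  shows "\<exists>m h. m \<le> n \<and> base_span {..<N} g = base_span {..<m} (h :: nat \<Rightarrow> 'a fract)"
proof (induct N)
  case 0
  then show ?case
    by (intro exI[of _ 0] exI[of _ g]) simp
next
  case (Suc N)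
  then obtain m h where mh: "m \<le> n" "base_span {..<N} g = base_span {..<m} h"
    by blast
  define h' where "h' = h(m := g N)"
  have "base_span {..<Suc N} g = {u + r * h' m | u r. u \<in> base_span {..<m} h' \<and> r \<in> base_ring}"
    unfolding base_span_Suc mh(2) using base_span_cong[of "{..<m}" h h'] by (simp add: h'_def)
  also have "\<dots> = base_span {..<Suc m} h'"
    unfolding base_span_Suc ..
  finally have eq: "base_span {..<Suc N} g = base_span {..<Suc m} h'" .
  show ?case
  proof (cases "m < n")
    case True
    then show ?thesis
      using eq by (intro exI[of _ "Suc m"] exI[of _ h']) auto
  next
    case False
    then have "m = n"
      using mh(1) by simp
    obtain i where "i \<le> n" "base_span {..n} h' = base_span ({..n} - {i}) h'"
      using breadth_le_base_span[OF assms] by blast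
    then have "base_span {..<Suc N} g = base_span {..<n} (\<lambda>j. h' (skip i j))"
      using eq \<open>m = n\<close> base_span_remove_eq_skip by (simp add: lessThan_Suc_atMost)
    then show ?thesis
      by blast
  qed
qed

section \<open>Integral equations of degree equal to the breadth\<close>

lemma integral_of_degree_if_eigenvector:
  fixes h :: "nat \<Rightarrow> 'a::idom fract" and a :: "nat \<Rightarrow> nat \<Rightarrow> 'a"
  assumes a: "\<And>i. i < m \<Longrightarrow> z * h i = (\<Sum>j<m. frac_embed (a i j) * h j)"
    and "i0 < m" "h i0 \<noteq> 0"
  shows "integral_of_degree m z"
proof -
  define B :: "'a mat" where "B = mat m m (\<lambda>(i, j). a i j)"
  define A where "A = map_mat frac_embed B"
  define v where "v = vec m h"
  have B: "B \<in> carrier_mat m m"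
    by (simp add: B_def)
  have "eigenvector A v z"
    unfolding eigenvector_def
  proof (intro conjI)
    show "v \<in> carrier_vec (dim_row A)"
      by (simp add: v_def A_def B_def)
    have "v $ i0 \<noteq> 0\<^sub>v m $ i0"
      using assms(2,3) by (simp add: v_def)
    then show "v \<noteq> 0\<^sub>v (dim_row A)"
      by (auto simp: A_def B_def)
    show "A *\<^sub>v v = z \<cdot>\<^sub>v v"
    proof (rule eq_vecI)
      fix i assume "i < dim_vec (z \<cdot>\<^sub>v v)"
      then have "i < m"
        by (simp add: v_def)
      then show "(A *\<^sub>v v) $ i = (z \<cdot>\<^sub>v v) $ i"
        using a[of i] by (simp add: A_def B_def v_def mult_mat_vec_def scalar_prod_def atLeast0LessThan)
    qed (simp add: A_def B_def v_def)
  qed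
  then have "poly (char_poly A) z = 0"
    using eigenvalue_root_char_poly[of A m z] B by (auto simp: eigenvalue_def A_def)
  moreover have "char_poly A = map_poly frac_embed (char_poly B)"
    unfolding A_def by (rule frac_embed.char_poly_hom[OF B])
  moreover have "lead_coeff (char_poly B) = 1" "degree (char_poly B) = m"
    using degree_monic_char_poly[OF B] by auto
  ultimately show ?thesis
    unfolding integral_of_degree_iff_monic_root by metis
qed

lemma integral_of_degree_if_mult_closed:
  fixes h :: "nat \<Rightarrow> 'a::idom fract"
  assumes "u \<in> base_span {..<m} h" "u \<noteq> 0"
    and closed: "\<And>v. v \<in> base_span {..<m} h \<Longrightarrow> z * v \<in> base_span {..<m} h"
  shows "integral_of_degree m z"
proof -
  \<comment> \<open>the determinant trick: \<open>z\<close> is an eigenvalue of the matrix over \<open>R\<close> of multiplication by \<open>z\<close>\<close>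
  have "\<forall>i<m. \<exists>a. z * h i = (\<Sum>j<m. frac_embed (a j) * h j)"
  proof (intro allI impI)
    fix i assume "i < m"
    then have "z * h i \<in> base_span {..<m} h"
      by (intro closed generator_in_base_span) auto
    then obtain r where r: "\<forall>j. r j \<in> base_ring" "z * h i = (\<Sum>j<m. r j * h j)"
      by (auto simp: base_span_def)
    obtain a where "\<And>j. r j = frac_embed (a j)"
      using base_ring_choice[OF r(1)] by blast
    then show "\<exists>a. z * h i = (\<Sum>j<m. frac_embed (a j) * h j)"
      using r(2) by auto
  qed
  then obtain a :: "nat \<Rightarrow> nat \<Rightarrow> 'a"
    where a: "\<And>i. i < m \<Longrightarrow> z * h i = (\<Sum>j<m. frac_embed (a i j) * h j)"
    by metis
  have "\<exists>i<m. h i \<noteq> 0"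
  proof (rule ccontr)
    assume "\<not> (\<exists>i<m. h i \<noteq> 0)"
    then have "\<forall>w\<in>base_span {..<m} h. w = 0"
      by (auto simp: base_span_def)
    then show False
      using assms(1,2) by blast
  qed
  then show ?thesis
    using integral_of_degree_if_eigenvector[OF a] by blast
qed

lemma power_span_mult_closed:
  assumes N: "integral_of_degree N z" and u: "u \<in> base_span {..<N} (\<lambda>j. z ^ j)"
  shows "z * u \<in> base_span {..<N} (\<lambda>j. z ^ j)"
proof -
  have generator: "z * z ^ j \<in> base_span {..<N} (\<lambda>j. z ^ j)" if "j < N" for j
  proof (cases "Suc j < N")
    case True
    then show ?thesis
      using generator_in_base_span[of "{..<N}" "Suc j" "\<lambda>j. z ^ j"] by simp
  next
    case False
    then have "Suc j = N"
      using that by simp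
    then have "z * z ^ j = z ^ N"
      by auto
    then show ?thesis
      using N unfolding integral_of_degree_def base_span_def by auto
  qed
  obtain r where r: "\<forall>j. r j \<in> base_ring" "u = (\<Sum>j<N. r j * z ^ j)"
    using u by (auto simp: base_span_def)
  have "z * u = (\<Sum>j<N. r j * (z * z ^ j))"
    by (simp add: r(2) sum_distrib_left mult.left_commute)
  also have "\<dots> \<in> base_span {..<N} (\<lambda>j. z ^ j)"
    using generator r(1) by (intro base_span_sum) auto
  finally show ?thesis .
qed

theorem integral_of_degree_breadth:
  assumes "breadth_le TYPE('a::idom) n" and "z \<in> integral_closure TYPE('a)"
  shows "integral_of_degree n z"
proof -
  obtain N where N: "integral_of_degree N z"
    using assms(2) integral_closure_iff by blast
  have "N \<noteq> 0"
  proof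
    assume "N = 0"
    then show False
      using N by (simp add: integral_of_degree_def)
  qed
  then have one: "1 \<in> base_span {..<N} (\<lambda>j. z ^ j)"
    using generator_in_base_span[of "{..<N}" 0 "\<lambda>j. z ^ j"] by simp
  obtain m h where "m \<le> n" and M: "base_span {..<N} (\<lambda>j. z ^ j) = base_span {..<m} h"
    using base_span_fewer_generators[OF assms(1)] by blast
  have "integral_of_degree m z"
    using one power_span_mult_closed[OF N] unfolding M
    by (intro integral_of_degree_if_mult_closed[of 1]) auto
  then show ?thesis
    using integral_of_degree_mono \<open>m \<le> n\<close> by blast
qed

corollary integral_closure_iff_integral_of_degree:
  assumes "breadth_le TYPE('a::idom) n"
  shows "z \<in> integral_closure TYPE('a) \<longleftrightarrow> integral_of_degree n z"
  using integral_of_degree_breadth[OF assms] integral_closure_iff by blast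

section \<open>Incomparable valuation rings\<close>

lemma exists_pos_avoiding_subsingletons:
  assumes "finite F" and single: "\<And>i m m'. i \<in> F \<Longrightarrow> P i m \<Longrightarrow> P i m' \<Longrightarrow> m = m'"
  shows "\<exists>m::nat. m \<ge> 1 \<and> (\<forall>i\<in>F. \<not> P i m)"
proof -
  have "finite {m. P i m}" if "i \<in> F" for i
  proof (cases "\<exists>m. P i m")
    case True
    then obtain m0 where "P i m0"
      by blast
    then have "{m. P i m} \<subseteq> {m0}"
      using single[OF that] by blast
    then show ?thesis
      using finite_subset by blast
  qed simp
  then have "finite (insert 0 (\<Union>i\<in>F. {m. P i m}))"
    using assms(1) by blast
  then obtain m where "m \<notin> insert 0 (\<Union>i\<in>F. {m. P i m})"
    using ex_new_if_finite[OF infinite_UNIV_nat] by blast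
  then show ?thesis
    by (intro exI[of _ m]) auto
qed

lemma unit_in_power_mult_unique:
  assumes W: "valuation_ring W" and c: "c \<notin> W"
    and "unit_in W (c ^ k * a)" "unit_in W (c ^ k' * a)"
  shows "k = k'"
proof -
  have False if "k < k'" "unit_in W (c ^ k * a)" "unit_in W (c ^ k' * a)" for k k'
  proof -
    have "c \<noteq> 0" "a \<noteq> 0"
      using c subring_zero[OF valuation_ring_subring[OF W]] that(2) by (auto simp: unit_in_def)
    then have "c ^ (k' - k) = (c ^ k' * a) * inverse (c ^ k * a)"
      using \<open>k < k'\<close> by (simp add: power_diff field_simps)
    also have "\<dots> \<in> W"
      using unit_in_mult[OF valuation_ring_subring[OF W] that(3)
          unit_in_inverse[OF valuation_ring_subring[OF W] that(2)]]
      by (simp add: unit_in_def)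
    finally show False
      using power_notin[OF W c, of "k' - k"] \<open>k < k'\<close> by simp
  qed
  then show ?thesis
    using assms(3,4) by (cases k k' rule: linorder_cases) auto
qed

lemma exists_power_nonunit:
  assumes "finite F" and "\<forall>W\<in>F. valuation_ring W \<and> c \<notin> W"
  shows "\<exists>m. m \<ge> 1 \<and> (\<forall>W\<in>F. \<not> unit_in W (c ^ m * a))"
  using assms(1) by (rule exists_pos_avoiding_subsingletons) (use assms(2) unit_in_power_mult_unique in blast)

lemma add_notin_if_ratio_nonunit:
  assumes W: "valuation_ring W" and x: "x \<notin> W" and "y \<noteq> 0" and nonunit: "\<not> unit_in W (x / y)"
  shows "x + y \<notin> W"
proof -
  note W_subring = valuation_ring_subring[OF W]
  have "x \<noteq> 0"
    using x subring_zero[OF W_subring] by auto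
  show ?thesis
  proof (cases "x / y \<in> W")
    case True
    then have "x / y \<in> nonunits W"
      using nonunit by (simp add: nonunits_def)
    moreover have "y \<notin> W"
    proof
      assume "y \<in> W"
      then have "x / y * y \<in> W"
        using True subring_mult[OF W_subring] by blast
      then show False
        using x \<open>y \<noteq> 0\<close> by simp
    qed
    moreover have "x + y = y * (1 + x / y)"
      using \<open>y \<noteq> 0\<close> by (simp add: field_simps)
    ultimately show ?thesis
      using notin_mult_unit[OF W_subring] unit_in_one_plus_nonunit[OF W] by metis
  next
    case False
    then have "y / x \<in> nonunits W"
      using inverse_in_nonunits_if_notin[OF W False] by simp
    moreover have "x + y = x * (1 + y / x)"
      using \<open>x \<noteq> 0\<close> by (simp add: field_simps)
    ultimately show ?thesis
      using notin_mult_unit[OF W_subring x] unit_in_one_plus_nonunit[OF W] by metis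
  qed
qed

lemma exists_nonunit_notin:
  assumes W: "valuation_ring W" and W': "valuation_ring W'" and "\<not> W \<subseteq> W'" "\<not> W' \<subseteq> W"
  shows "\<exists>b\<in>nonunits W. b \<notin> W'"
proof -
  obtain a d where ad: "a \<in> W" "a \<notin> W'" "d \<in> W'" "d \<notin> W"
    using assms(3,4) by auto
  have "d \<noteq> 0"
    using ad(4) subring_zero[OF valuation_ring_subring[OF W]] by auto
  have "inverse d * a \<in> nonunits W"
    using nonunits_mult_right[OF W inverse_in_nonunits_if_notin[OF W ad(4)] ad(1)] .
  moreover have "inverse d * a \<notin> W'"
  proof
    assume "inverse d * a \<in> W'"
    then have "inverse d * a * d \<in> W'"
      using ad(3) subring_mult[OF valuation_ring_subring[OF W']] by blast
    moreover have "inverse d * a * d = a"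
      using \<open>d \<noteq> 0\<close> by (simp add: field_simps)
    ultimately show False
      using ad(2) by simp
  qed
  ultimately show ?thesis
    by blast
qed

lemma exists_nonunit_notin_incomparable:
  assumes W: "valuation_ring W" and "finite F"
    and "\<forall>W'\<in>F. valuation_ring W' \<and> \<not> W \<subseteq> W' \<and> \<not> W' \<subseteq> W"
  shows "\<exists>c\<in>nonunits W. \<forall>W'\<in>F. c \<notin> W'"
  using assms(2,3)
proof (induct F rule: finite_induct)
  case empty
  then show ?case
    using zero_in_nonunits[OF valuation_ring_subring[OF W]] by blast
next
  case (insert W' F)
  then obtain c where c: "c \<in> nonunits W" "\<forall>Wi\<in>F. c \<notin> Wi"
    by auto
  have W': "valuation_ring W'" "\<not> W \<subseteq> W'" "\<not> W' \<subseteq> W"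
    using insert by auto
  have F: "\<forall>Wi\<in>F. valuation_ring Wi \<and> c \<notin> Wi"
    using c(2) insert by blast
  show ?case
  proof (cases "c \<in> W'")
    case False
    then show ?thesis
      using c by auto
  next
    case True
    \<comment> \<open>perturb a power of \<open>c\<close> by an element \<open>b\<close> of the maximal ideal of \<open>W\<close> outside \<open>W'\<close>,
      choosing the power so that the ratio is a unit of no ring of \<open>F\<close>\<close>
    obtain b where b: "b \<in> nonunits W" "b \<notin> W'"
      using exists_nonunit_notin[OF W W'] by blast
    then have "b \<noteq> 0"
      using subring_zero[OF valuation_ring_subring[OF W'(1)]] by auto
    obtain m where m: "m \<ge> 1" "\<forall>Wi\<in>F. \<not> unit_in Wi (c ^ m * inverse b)"
      using exists_power_nonunit[OF insert(1) F] by blast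
    have "c ^ m + b \<in> nonunits W"
      using nonunits_add[OF W nonunits_power[OF W c(1) m(1)] b(1)] .
    moreover have "c ^ m + b \<notin> W'"
    proof
      assume "c ^ m + b \<in> W'"
      then have "c ^ m + b - c ^ m \<in> W'"
        using True subring_diff[OF valuation_ring_subring[OF W'(1)]]
          subring_power[OF valuation_ring_subring[OF W'(1)]] by blast
      then show False
        using b(2) by simp
    qed
    moreover have "c ^ m + b \<notin> Wi" if "Wi \<in> F" for Wi
      using add_notin_if_ratio_nonunit[OF _ power_notin \<open>b \<noteq> 0\<close>] F m that
      by (simp add: divide_inverse)
    ultimately show ?thesis
      by blast
  qed
qed

lemma exists_separating_nonunits:
  assumes "finite F" and "\<And>W. W \<in> F \<Longrightarrow> valuation_ring W"
    and incomparable: "\<And>W W'. W \<in> F \<Longrightarrow> W' \<in> F \<Longrightarrow> W \<noteq> W' \<Longrightarrow> \<not> W \<subseteq> W'"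
  shows "\<exists>c. \<forall>W\<in>F. c W \<in> nonunits W \<and> (\<forall>W'\<in>F - {W}. c W \<notin> W')"
proof -
  have "\<exists>c\<in>nonunits W. \<forall>W'\<in>F - {W}. c \<notin> W'" if "W \<in> F" for W
  proof (rule exists_nonunit_notin_incomparable)
    show "valuation_ring W"
      using assms(2) that .
    show "finite (F - {W})"
      using assms(1) by simp
    show "\<forall>W'\<in>F - {W}. valuation_ring W' \<and> \<not> W \<subseteq> W' \<and> \<not> W' \<subseteq> W"
      using assms(2) incomparable that by blast
  qed
  then have "\<forall>W\<in>F. \<exists>c. c \<in> nonunits W \<and> (\<forall>W'\<in>F - {W}. c \<notin> W')"
    by blast
  then show ?thesis
    by (rule bchoice)
qed

lemma breadth_le_separated_family:
  fixes V :: "nat \<Rightarrow> 'a::idom fract set"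
  assumes "breadth_le TYPE('a) n"
    and V: "\<And>i. i \<le> n \<Longrightarrow> valuation_ring (V i) \<and> base_ring \<subseteq> V i"
    and c: "\<And>i. i \<le> n \<Longrightarrow> c i \<in> nonunits (V i) \<and> c i \<noteq> 0"
    and separated: "\<And>i j. i \<le> n \<Longrightarrow> j \<le> n \<Longrightarrow> j \<noteq> i \<Longrightarrow> c j \<notin> V i"
  shows False
proof -
  \<comment> \<open>breadth makes one inverse \<open>1 / c i\<close> an \<open>R\<close>-combination of the others, which lie in the
    maximal ideal of \<open>V i\<close>\<close>
  define y where "y = (\<lambda>i. inverse (c i))"
  obtain i where i: "i \<le> n" "base_span {..n} y = base_span ({..n} - {i}) y"
    using breadth_le_base_span[OF assms(1), of y] by blast
  then have "y i \<in> base_span ({..n} - {i}) y"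
    using generator_in_base_span[of "{..n}" i y] by simp
  then obtain r where r: "\<forall>j. r j \<in> base_ring" "y i = (\<Sum>j\<in>{..n} - {i}. r j * y j)"
    by (auto simp: base_span_def)
  have Vi: "valuation_ring (V i)"
    using V[OF i(1)] by blast
  have "y i \<in> nonunits (V i)"
    unfolding r(2)
  proof (rule nonunits_sum[OF Vi])
    fix j assume j: "j \<in> {..n} - {i}"
    then have "c j \<notin> V i"
      using separated[OF i(1)] by simp
    then have "y j \<in> nonunits (V i)"
      unfolding y_def by (rule inverse_in_nonunits_if_notin[OF Vi])
    moreover have "r j \<in> V i"
      using r(1) V[OF i(1)] by blast
    ultimately show "r j * y j \<in> nonunits (V i)"
      by (rule nonunits_mult_left[OF Vi])
  qed
  then have "inverse (c i) \<in> V i"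
    using nonunits_subset[OF valuation_ring_subring[OF Vi]] by (auto simp: y_def)
  moreover have "inverse (c i) \<notin> V i"
    using c[OF i(1)] by (intro inverse_notin_if_nonunit[OF valuation_ring_subring[OF Vi]]) auto
  ultimately show False
    by contradiction
qed

lemma card_incomparable_valuation_rings_le:
  fixes F :: "'a::idom fract set set"
  assumes br: "breadth_le TYPE('a) n" and "n \<ge> 1" and "finite F"
    and F: "\<And>V. V \<in> F \<Longrightarrow> valuation_ring V \<and> base_ring \<subseteq> V"
    and incomparable: "\<And>V W. V \<in> F \<Longrightarrow> W \<in> F \<Longrightarrow> V \<noteq> W \<Longrightarrow> \<not> V \<subseteq> W"
  shows "card F \<le> n"
proof (rule ccontr)
  assume "\<not> card F \<le> n"
  then obtain F' where "F' \<subseteq> F" "card F' = Suc n"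
    using obtain_subset_with_card_n[of "Suc n" F] by auto
  then obtain V where V: "bij_betw V {..n} F'"
    using finite_same_card_bij[of "{..n}" F'] \<open>finite F\<close> finite_subset by fastforce
  have V_in: "V i \<in> F" if "i \<le> n" for i
    using V that \<open>F' \<subseteq> F\<close> by (auto simp: bij_betw_def)
  have V_inj: "V i \<noteq> V j" if "i \<le> n" "j \<le> n" "i \<noteq> j" for i j
    using V that by (auto simp: bij_betw_def inj_on_def)
  have vr: "valuation_ring W" if "W \<in> F" for W
    using F[OF that] by blast
  obtain c where c: "\<forall>W\<in>F. c W \<in> nonunits W \<and> (\<forall>W'\<in>F - {W}. c W \<notin> W')"
    using exists_separating_nonunits[OF \<open>finite F\<close> vr incomparable] by blast
  have separated: "c (V j) \<notin> V i" if "i \<le> n" "j \<le> n" "j \<noteq> i" for i j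
  proof -
    have "V j \<in> F" "V i \<in> F - {V j}"
      using V_in V_inj that by auto
    then show ?thesis
      using c by blast
  qed
  have nonunit: "c (V i) \<in> nonunits (V i) \<and> c (V i) \<noteq> 0" if "i \<le> n" for i
  proof -
    \<comment> \<open>here \<open>n \<ge> 1\<close> provides a second ring, which contains \<open>0\<close> but not \<open>c (V i)\<close>\<close>
    define j :: nat where "j = (if i = 0 then 1 else 0)"
    have "j \<le> n" "i \<noteq> j"
      using \<open>n \<ge> 1\<close> by (auto simp: j_def)
    then have "c (V i) \<notin> V j"
      using separated[OF \<open>j \<le> n\<close> that] by blast
    moreover have "0 \<in> V j"
      using subring_zero[OF valuation_ring_subring[OF vr[OF V_in[OF \<open>j \<le> n\<close>]]]] .
    ultimately have "c (V i) \<noteq> 0"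
      by auto
    moreover have "c (V i) \<in> nonunits (V i)"
      using c V_in[OF that] by blast
    ultimately show ?thesis
      by blast
  qed
  have "valuation_ring (V i) \<and> base_ring \<subseteq> V i" if "i \<le> n" for i
    using F V_in that by blast
  from breadth_le_separated_family[OF br this nonunit separated]
  show False .
qed

lemma finite_min_valuation_rings:
  assumes "breadth_le TYPE('a::idom) n" and "n \<ge> 1"
  shows "finite (min_valuation_rings :: 'a fract set set)"
proof (rule ccontr)
  assume "infinite (min_valuation_rings :: 'a fract set set)"
  then obtain F where F: "finite F" "card F = Suc n" "F \<subseteq> (min_valuation_rings :: 'a fract set set)"
    using infinite_arbitrarily_large by blast
  have "card F \<le> n"
  proof (rule card_incomparable_valuation_rings_le[OF assms F(1)])
    fix V assume "V \<in> F"
    then show "valuation_ring V \<and> base_ring \<subseteq> V"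
      using F(3) min_valuation_ringsD by blast
  next
    fix V W assume "V \<in> F" "W \<in> F" "V \<noteq> W"
    then show "\<not> V \<subseteq> W"
      using F(3) min_valuation_rings_incomparable by blast
  qed
  then show False
    using F(2) by simp
qed

section \<open>Recovering one valuation ring from the intersection\<close>

lemma inverse_one_plus_in_if_not_unit:
  assumes W: "valuation_ring W" and "e \<in> W" and w: "\<not> unit_in W w"
  shows "inverse (1 + w) \<in> W" and "w * e * inverse (1 + w) \<in> W"
proof -
  note W_subring = valuation_ring_subring[OF W]
  have "inverse (1 + w) \<in> W \<and> w * inverse (1 + w) \<in> W"
  proof (cases "w \<in> W")
    case True
    then have "unit_in W (1 + w)"
      using w unit_in_one_plus_nonunit[OF W] by (simp add: nonunits_def)
    then show ?thesis
      using True subring_mult[OF W_subring] by (simp add: unit_in_def)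
  next
    case False
    then have "w \<noteq> 0" "1 + w \<noteq> 0"
      using subring_zero[OF W_subring] subring_uminus_iff[OF W_subring, of 1] subring_one[OF W_subring]
      by (auto simp: add_eq_0_iff)
    have u: "inverse (1 + inverse w) \<in> W"
      using unit_in_one_plus_nonunit[OF W inverse_in_nonunits_if_notin[OF W False]]
      by (simp add: unit_in_def)
    have "inverse w \<in> W"
      using inverse_in_nonunits_if_notin[OF W False] nonunits_subset[OF W_subring] by blast
    have eq1: "inverse (1 + w) = inverse w * inverse (1 + inverse w)"
      and eq2: "w * inverse (1 + w) = inverse (1 + inverse w)"
      using \<open>w \<noteq> 0\<close> \<open>1 + w \<noteq> 0\<close> by (simp_all add: field_simps)
    have "inverse (1 + w) \<in> W"
      unfolding eq1 using \<open>inverse w \<in> W\<close> u by (rule subring_mult[OF W_subring])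
    moreover have "w * inverse (1 + w) \<in> W"
      unfolding eq2 by (rule u)
    ultimately show ?thesis
      by blast
  qed
  then show "inverse (1 + w) \<in> W" and "w * e * inverse (1 + w) \<in> W"
    using \<open>e \<in> W\<close> subring_mult[OF W_subring] by (auto simp: ac_simps)
qed

context
  fixes Ms :: "'k::field set set" and V :: "'k set" and c :: 'k
  assumes finite: "finite Ms" and valuation_rings: "\<And>W. W \<in> Ms \<Longrightarrow> valuation_ring W"
    and V: "V \<in> Ms" and c_nonunit: "c \<in> nonunits V"
    and c_notin: "\<And>W. W \<in> Ms \<Longrightarrow> W \<noteq> V \<Longrightarrow> c \<notin> W"
begin

private lemma member_subring: "W \<in> Ms \<Longrightarrow> subring W"
  using valuation_rings valuation_ring_subring by blast

lemma exists_unit_multiplier: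
  assumes z: "z \<in> V"
  shows "\<exists>s. unit_in V s \<and> s \<in> \<Inter>Ms \<and> s * z \<in> \<Inter>Ms"
proof -
  have VV: "valuation_ring V"
    using valuation_rings V by blast
  have others: "\<forall>W\<in>Ms - {V}. valuation_ring W \<and> c \<notin> W"
    using valuation_rings c_notin by blast
  obtain m where m: "m \<ge> 1" "\<forall>W\<in>Ms - {V}. \<not> unit_in W (c ^ m * z)"
    using exists_power_nonunit[OF finite_Diff[OF finite] others, of z] by blast
  \<comment> \<open>\<open>w\<close> lies in the maximal ideal of \<open>V\<close> and is a unit of no other ring\<close>
  define w where "w = c ^ m * z"
  define s where "s = inverse (1 + w)"
  have w: "w \<in> nonunits V"
    unfolding w_def using nonunits_mult_right[OF VV nonunits_power[OF VV c_nonunit m(1)] z] .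
  then have s: "unit_in V s"
    unfolding s_def using unit_in_inverse[OF member_subring[OF V] unit_in_one_plus_nonunit[OF VV]] by blast
  have "s \<in> W \<and> s * z \<in> W" if W: "W \<in> Ms" for W
  proof (cases "W = V")
    case True
    then show ?thesis
      using s z subring_mult[OF member_subring[OF V]] by (auto simp: unit_in_def)
  next
    case False
    have WW: "valuation_ring W"
      using valuation_rings W by blast
    note W_subring = member_subring[OF W]
    have "c \<noteq> 0"
      using c_notin[OF W False] subring_zero[OF W_subring] by auto
    then have z_eq: "z = w * inverse c ^ m"
      by (simp add: w_def field_simps power_inverse)
    have "inverse c ^ m \<in> W"
      using inverse_in_nonunits_if_notin[OF WW c_notin[OF W False]]
        nonunits_subset[OF W_subring] subring_power[OF W_subring] by blast
    moreover have "\<not> unit_in W w"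
      using m(2) W False by (simp add: w_def)
    ultimately have in_W: "inverse (1 + w) \<in> W" "w * inverse c ^ m * inverse (1 + w) \<in> W"
      by (rule inverse_one_plus_in_if_not_unit[OF WW])+
    have "s * z = w * inverse c ^ m * inverse (1 + w)"
      unfolding s_def z_eq by (rule mult.commute)
    then show ?thesis
      using in_W by (simp only: s_def)
  qed
  then show ?thesis
    using s by blast
qed

lemma multiplier_condition:
  assumes s: "unit_in V s" "s \<in> \<Inter>Ms" and W: "W \<in> Ms"
  shows "s + c \<noteq> 0 \<and> (1 + c) / (s + c) \<in> W"
proof (cases "W = V")
  case True
  have VV: "valuation_ring V"
    using valuation_rings V by blast
  have "unit_in V (s + c)"
    using unit_in_add_nonunit[OF VV s(1) c_nonunit] .
  moreover have "1 + c \<in> V"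
    using c_nonunit nonunits_subset[OF member_subring[OF V]] subring_add[OF member_subring[OF V]]
      subring_one[OF member_subring[OF V]] by blast
  ultimately show ?thesis
    using True subring_mult[OF member_subring[OF V]] by (auto simp: unit_in_def divide_inverse)
next
  case False
  have WW: "valuation_ring W"
    using valuation_rings W by blast
  note W_subring = member_subring[OF W]
  \<comment> \<open>in \<open>W\<close> we have \<open>1 / c\<close> in the maximal ideal and \<open>(1 + c) / (s + c) = (1 / c + 1) / (s / c + 1)\<close>\<close>
  have "c \<noteq> 0"
    using c_notin[OF W False] subring_zero[OF W_subring] by auto
  have e: "inverse c \<in> nonunits W"
    using inverse_in_nonunits_if_notin[OF WW c_notin[OF W False]] .
  have "s * inverse c \<in> nonunits W"
    using nonunits_mult_left[OF WW e] s(2) W by blast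
  then have u: "unit_in W (1 + s * inverse c)"
    by (rule unit_in_one_plus_nonunit[OF WW])
  have "1 + s * inverse c \<noteq> 0"
    using u by (simp add: unit_in_def)
  have "s + c = c * (1 + s * inverse c)"
    using \<open>c \<noteq> 0\<close> by (simp add: field_simps)
  then have "s + c \<noteq> 0"
    using \<open>c \<noteq> 0\<close> \<open>1 + s * inverse c \<noteq> 0\<close> by simp
  moreover have "(1 + c) / (s + c) = (1 + c) * inverse c * inverse (1 + s * inverse c)"
    unfolding \<open>s + c = c * (1 + s * inverse c)\<close> by (simp add: divide_inverse mult.assoc)
  moreover have "(1 + c) * inverse c = inverse c + 1"
    using \<open>c \<noteq> 0\<close> by (simp add: distrib_right)
  moreover have "inverse c + 1 \<in> W"
    using e nonunits_subset[OF W_subring] subring_add[OF W_subring] subring_one[OF W_subring] by blast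
  ultimately show ?thesis
    using u subring_mult[OF W_subring] by (simp add: unit_in_def del: inverse_mult_distrib)
qed

lemma in_valuation_ring_iff_multiplier:
  "z \<in> V \<longleftrightarrow> (\<exists>s. s \<in> \<Inter>Ms \<and> s * z \<in> \<Inter>Ms \<and> s + c \<noteq> 0 \<and> (1 + c) / (s + c) \<in> \<Inter>Ms)"
proof
  assume "z \<in> V"
  then obtain s where s: "unit_in V s" "s \<in> \<Inter>Ms" "s * z \<in> \<Inter>Ms"
    using exists_unit_multiplier by blast
  then show "\<exists>s. s \<in> \<Inter>Ms \<and> s * z \<in> \<Inter>Ms \<and> s + c \<noteq> 0 \<and> (1 + c) / (s + c) \<in> \<Inter>Ms"
    using multiplier_condition[OF s(1,2)] V by blast
next
  assume "\<exists>s. s \<in> \<Inter>Ms \<and> s * z \<in> \<Inter>Ms \<and> s + c \<noteq> 0 \<and> (1 + c) / (s + c) \<in> \<Inter>Ms"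
  then obtain s where "s \<in> V" "s * z \<in> V" "s + c \<noteq> 0" "(1 + c) / (s + c) \<in> V"
    using V by blast
  have VV: "valuation_ring V"
    using valuation_rings V by blast
  note V_subring = member_subring[OF V]
  have "unit_in V s"
  proof (rule ccontr)
    assume "\<not> unit_in V s"
    then have "s + c \<in> nonunits V"
      using \<open>s \<in> V\<close> nonunits_add[OF VV _ c_nonunit] by (simp add: nonunits_def)
    then have "inverse (s + c) \<notin> V"
      using inverse_notin_if_nonunit[OF V_subring] \<open>s + c \<noteq> 0\<close> by blast
    moreover have "(1 + c) / (s + c) * inverse (1 + c) \<in> V"
      using \<open>(1 + c) / (s + c) \<in> V\<close> unit_in_one_plus_nonunit[OF VV c_nonunit]
      by (intro subring_mult[OF V_subring]) (auto simp: unit_in_def)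
    moreover have "1 + c \<noteq> 0"
      using unit_in_one_plus_nonunit[OF VV c_nonunit] by (simp add: unit_in_def)
    then have "(1 + c) / (s + c) * inverse (1 + c) = inverse (s + c)"
      by (simp add: field_simps)
    ultimately show False
      by simp
  qed
  then have "z = s * z * inverse s" and "inverse s \<in> V"
    by (auto simp: unit_in_def)
  then show "z \<in> V"
    using \<open>s * z \<in> V\<close> subring_mult[OF V_subring] by metis
qed

end

section \<open>Definability\<close>

primrec tvars :: "'a rterm \<Rightarrow> nat set" where
  "tvars (RVar k) = {k}"
| "tvars (RConst c) = {}"
| "tvars RZero = {}"
| "tvars ROne = {}"
| "tvars (RAdd s t) = tvars s \<union> tvars t"
| "tvars (RMinus s) = tvars s"
| "tvars (RMul s t) = tvars s \<union> tvars t"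

lemma teval_cong: "(\<And>k. k \<in> tvars t \<Longrightarrow> e k = e' k) \<Longrightarrow> teval e t = teval e' t"
  by (induct t) auto

primrec tpower :: "'a rterm \<Rightarrow> nat \<Rightarrow> 'a rterm" where
  "tpower t 0 = ROne"
| "tpower t (Suc k) = RMul (tpower t k) t"

lemma teval_tpower [simp]: "teval e (tpower t k) = teval e t ^ k"
  by (induct k) auto

primrec tsum :: "nat \<Rightarrow> (nat \<Rightarrow> 'a rterm) \<Rightarrow> 'a rterm" where
  "tsum 0 f = RZero"
| "tsum (Suc k) f = RAdd (tsum k f) (f k)"

lemma teval_tsum [simp]: "teval e (tsum k f) = (\<Sum>j<k. teval e (f j))"
  by (induct k) auto

primrec fexists :: "nat \<Rightarrow> nat \<Rightarrow> 'a rformula \<Rightarrow> 'a rformula" where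
  "fexists b 0 \<phi> = \<phi>"
| "fexists b (Suc k) \<phi> = FEx b (fexists (Suc b) k \<phi>)"

definition assign_block :: "(nat \<Rightarrow> 'a) \<Rightarrow> nat \<Rightarrow> nat \<Rightarrow> (nat \<Rightarrow> 'a) \<Rightarrow> nat \<Rightarrow> 'a" where
  "assign_block e b k c = (\<lambda>j. if b \<le> j \<and> j < b + k then c (j - b) else e j)"

lemma sat_fexists: "sat e (fexists b k \<phi>) \<longleftrightarrow> (\<exists>c. sat (assign_block e b k c) \<phi>)"
proof (induct k arbitrary: b e)
  case 0
  have "assign_block e b 0 c = e" for c
    by (rule ext) (auto simp: assign_block_def)
  then show ?case
    by simp
next
  case (Suc k)
  have cons: "assign_block (e(b := a)) (Suc b) k c =
      assign_block e b (Suc k) (\<lambda>i. if i = 0 then a else c (i - 1))" for a c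
    by (rule ext) (auto simp: assign_block_def)
  have uncons: "assign_block e b (Suc k) c =
      assign_block (e(b := c 0)) (Suc b) k (\<lambda>i. c (Suc i))" for c
    by (rule ext) (auto simp: assign_block_def Suc_diff_Suc)
  show ?case
  proof
    assume "sat e (fexists b (Suc k) \<phi>)"
    then obtain a where "sat (e(b := a)) (fexists (Suc b) k \<phi>)"
      by auto
    then obtain c where "sat (assign_block (e(b := a)) (Suc b) k c) \<phi>"
      using Suc.hyps by blast
    then show "\<exists>c. sat (assign_block e b (Suc k) c) \<phi>"
      unfolding cons by blast
  next
    assume "\<exists>c. sat (assign_block e b (Suc k) c) \<phi>"
    then obtain c where "sat (assign_block (e(b := c 0)) (Suc b) k (\<lambda>i. c (Suc i))) \<phi>"
      unfolding uncons by blast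
    then have "sat (e(b := c 0)) (fexists (Suc b) k \<phi>)"
      using Suc.hyps by blast
    then show "sat e (fexists b (Suc k) \<phi>)"
      by auto
  qed
qed

lemma frac_embed_divide_power_eq_iff:
  fixes N D :: "'a::idom"
  assumes "D \<noteq> 0"
  shows "(frac_embed N / frac_embed D) ^ n = (\<Sum>j<n. frac_embed (c j) * (frac_embed N / frac_embed D) ^ j)
    \<longleftrightarrow> N ^ n = (\<Sum>j<n. c j * (N ^ j * D ^ (n - j)))"
proof -
  have rhs: "(\<Sum>j<n. frac_embed (c j) * (frac_embed N / frac_embed D) ^ j) * frac_embed D ^ n =
      frac_embed (\<Sum>j<n. c j * (N ^ j * D ^ (n - j)))"
    unfolding sum_distrib_right frac_embed.hom_sum
  proof (rule sum.cong[OF refl])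
    fix j assume "j \<in> {..<n}"
    then have "frac_embed D ^ n = frac_embed D ^ j * frac_embed D ^ (n - j)"
      by (simp add: power_add[symmetric])
    then show "frac_embed (c j) * (frac_embed N / frac_embed D) ^ j * frac_embed D ^ n =
        frac_embed (c j * (N ^ j * D ^ (n - j)))"
      using assms by (simp add: power_divide field_simps)
  qed
  have lhs: "(frac_embed N / frac_embed D) ^ n * frac_embed D ^ n = frac_embed (N ^ n)"
    using assms by (simp add: power_divide)
  have "frac_embed D ^ n \<noteq> 0"
    using assms by simp
  then have "(frac_embed N / frac_embed D) ^ n = (\<Sum>j<n. frac_embed (c j) * (frac_embed N / frac_embed D) ^ j)
      \<longleftrightarrow> frac_embed (N ^ n) = frac_embed (\<Sum>j<n. c j * (N ^ j * D ^ (n - j)))"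
    unfolding lhs[symmetric] rhs[symmetric] by (simp only: mult_cancel_right) simp
  then show ?thesis
    by (simp only: frac_embed.eq_iff)
qed

lemma integral_of_degree_Fract_iff:
  assumes "D \<noteq> 0"
  shows "integral_of_degree n (Fraction_Field.Fract N D) \<longleftrightarrow>
    (\<exists>c. N ^ n = (\<Sum>j<n. c j * (N ^ j * D ^ (n - j))))"
proof
  assume "integral_of_degree n (Fraction_Field.Fract N D)"
  then obtain r where r: "\<forall>j. r j \<in> base_ring"
    "(frac_embed N / frac_embed D) ^ n = (\<Sum>j<n. r j * (frac_embed N / frac_embed D) ^ j)"
    unfolding integral_of_degree_def Fract_eq_frac_embed_divide[OF assms] by blast
  obtain c where "\<And>j. r j = frac_embed (c j)"
    using base_ring_choice[OF r(1)] by blast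
  then show "\<exists>c. N ^ n = (\<Sum>j<n. c j * (N ^ j * D ^ (n - j)))"
    using r(2) frac_embed_divide_power_eq_iff[OF assms] by auto
next
  assume "\<exists>c. N ^ n = (\<Sum>j<n. c j * (N ^ j * D ^ (n - j)))"
  then obtain c where "(frac_embed N / frac_embed D) ^ n =
      (\<Sum>j<n. frac_embed (c j) * (frac_embed N / frac_embed D) ^ j)"
    using frac_embed_divide_power_eq_iff[OF assms] by blast
  then show "integral_of_degree n (Fraction_Field.Fract N D)"
    unfolding integral_of_degree_def Fract_eq_frac_embed_divide[OF assms]
    by (intro exI[of _ "\<lambda>j. frac_embed (c j)"]) simp
qed

definition integral_formula :: "nat \<Rightarrow> nat \<Rightarrow> 'a rterm \<Rightarrow> 'a rterm \<Rightarrow> 'a rformula" where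
  "integral_formula n b tN tD = FConj (FNot (FEq tD RZero))
     (fexists b n (FEq (tpower tN n)
        (tsum n (\<lambda>j. RMul (RVar (b + j)) (RMul (tpower tN j) (tpower tD (n - j)))))))"

lemma sat_integral_formula:
  fixes e :: "nat \<Rightarrow> 'a::idom"
  assumes "breadth_le TYPE('a) n" and vars: "\<And>k. k \<in> tvars tN \<union> tvars tD \<Longrightarrow> k < b"
  shows "sat e (integral_formula n b tN tD) \<longleftrightarrow>
    teval e tD \<noteq> 0 \<and> Fraction_Field.Fract (teval e tN) (teval e tD) \<in> integral_closure TYPE('a)"
proof -
  define N where "N = teval e tN"
  define D where "D = teval e tD"
  have N: "teval (assign_block e b n c) tN = N" for c
    unfolding N_def using vars by (intro teval_cong) (fastforce simp: assign_block_def)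
  have D: "teval (assign_block e b n c) tD = D" for c
    unfolding D_def using vars by (intro teval_cong) (fastforce simp: assign_block_def)
  have coefficients: "(\<Sum>j<n. assign_block e b n c (b + j) * (N ^ j * D ^ (n - j))) =
      (\<Sum>j<n. c j * (N ^ j * D ^ (n - j)))" for c
    by (rule sum.cong) (auto simp: assign_block_def)
  have "sat e (integral_formula n b tN tD) \<longleftrightarrow>
      D \<noteq> 0 \<and> (\<exists>c. N ^ n = (\<Sum>j<n. c j * (N ^ j * D ^ (n - j))))"
    unfolding integral_formula_def sat.simps sat_fexists teval.simps teval_tpower teval_tsum N D
      D_def[symmetric] coefficients
    by simp
  also have "\<dots> \<longleftrightarrow> D \<noteq> 0 \<and> Fraction_Field.Fract N D \<in> integral_closure TYPE('a)"
    using integral_of_degree_Fract_iff integral_closure_iff_integral_of_degree[OF assms(1)] by blast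
  finally show ?thesis
    by (simp add: N_def D_def)
qed

theorem frac_definable_integral_closure:
  assumes "breadth_le TYPE('a::idom) n"
  shows "frac_definable (integral_closure TYPE('a))"
  unfolding frac_definable_def definable2_def
proof (intro exI allI)
  fix a b :: 'a
  show "(b \<noteq> 0 \<and> Fraction_Field.Fract a b \<in> integral_closure TYPE('a)) \<longleftrightarrow>
      sat ((\<lambda>_. 0)(0 := a, 1 := b)) (integral_formula n 2 (RVar 0) (RVar 1))"
    by (subst sat_integral_formula[OF assms]) auto
qed

lemma ex_fract_iff: "(\<exists>s :: 'a::idom fract. P s) \<longleftrightarrow> (\<exists>x y. y \<noteq> 0 \<and> P (Fraction_Field.Fract x y))"
proof
  assume "\<exists>s. P s"
  then obtain s where "P s"
    by blast
  then show "\<exists>x y. y \<noteq> 0 \<and> P (Fraction_Field.Fract x y)"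
    by (cases s) blast
qed blast

lemma Fract_eq_zero_iff: "b \<noteq> 0 \<Longrightarrow> Fraction_Field.Fract a b = 0 \<longleftrightarrow> a = 0"
  by (simp add: Zero_fract_def eq_fract)

lemma multiplier_Fract:
  fixes x y c1 c2 :: "'a::idom"
  assumes "y \<noteq> 0" "c2 \<noteq> 0"
  shows "Fraction_Field.Fract x y + Fraction_Field.Fract c1 c2 \<noteq> 0 \<longleftrightarrow> x * c2 + c1 * y \<noteq> 0"
    and "(1 + Fraction_Field.Fract c1 c2) / (Fraction_Field.Fract x y + Fraction_Field.Fract c1 c2) =
      Fraction_Field.Fract ((c2 + c1) * y) (x * c2 + c1 * y)"
proof -
  have sum: "Fraction_Field.Fract x y + Fraction_Field.Fract c1 c2 =
      Fraction_Field.Fract (x * c2 + c1 * y) (y * c2)"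
    using assms by simp
  then show "Fraction_Field.Fract x y + Fraction_Field.Fract c1 c2 \<noteq> 0 \<longleftrightarrow> x * c2 + c1 * y \<noteq> 0"
    using assms by (simp add: Fract_eq_zero_iff)
  have "1 + Fraction_Field.Fract c1 c2 = Fraction_Field.Fract (c2 + c1) c2"
    using assms by (simp add: One_fract_def)
  then have "(1 + Fraction_Field.Fract c1 c2) / (Fraction_Field.Fract x y + Fraction_Field.Fract c1 c2) =
      Fraction_Field.Fract (c2 * ((c2 + c1) * y)) (c2 * (x * c2 + c1 * y))"
    unfolding sum by (simp add: ac_simps)
  also have "\<dots> = Fraction_Field.Fract ((c2 + c1) * y) (x * c2 + c1 * y)"
    using assms(2) by (rule mult_fract_cancel)
  finally show "(1 + Fraction_Field.Fract c1 c2) / (Fraction_Field.Fract x y + Fraction_Field.Fract c1 c2) =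
      Fraction_Field.Fract ((c2 + c1) * y) (x * c2 + c1 * y)" .
qed

lemma frac_definable_by_multiplier:
  fixes c1 c2 :: "'a::idom" and V :: "'a fract set"
  assumes br: "breadth_le TYPE('a) n" and "c2 \<noteq> 0"
    and V: "\<And>z. z \<in> V \<longleftrightarrow> (\<exists>s. s \<in> integral_closure TYPE('a) \<and> s * z \<in> integral_closure TYPE('a) \<and>
      s + Fraction_Field.Fract c1 c2 \<noteq> 0 \<and>
      (1 + Fraction_Field.Fract c1 c2) / (s + Fraction_Field.Fract c1 c2) \<in> integral_closure TYPE('a))"
  shows "frac_definable V"
proof -
  let ?S = "integral_closure TYPE('a)"
  \<comment> \<open>the multiplier \<open>s = x / y\<close> is quantified as the pair of variables \<open>2, 3\<close>\<close>
  define tN :: "'a rterm" where "tN = RMul (RAdd (RConst c2) (RConst c1)) (RVar 3)"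
  define tD :: "'a rterm" where "tD = RAdd (RMul (RVar 2) (RConst c2)) (RMul (RConst c1) (RVar 3))"
  define \<phi> where "\<phi> = FConj (FNot (FEq (RVar 1) RZero)) (FEx 2 (FEx 3
    (FConj (integral_formula n 4 (RVar 2) (RVar 3))
      (FConj (integral_formula n 4 (RMul (RVar 2) (RVar 0)) (RMul (RVar 3) (RVar 1)))
        (integral_formula n 4 tN tD)))))"
  have sat_formula: "sat e (integral_formula n 4 t t') \<longleftrightarrow>
      teval e t' \<noteq> 0 \<and> Fraction_Field.Fract (teval e t) (teval e t') \<in> ?S"
    if "\<And>k. k \<in> tvars t \<union> tvars t' \<Longrightarrow> k < 4" for e :: "nat \<Rightarrow> 'a" and t t'
    by (rule sat_integral_formula[OF br that])
  show ?thesis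
    unfolding frac_definable_def definable2_def
  proof (intro exI[of _ \<phi>] allI)
    fix a b :: 'a
    let ?e = "((\<lambda>_. 0)(0 := a, 1 := b)) :: nat \<Rightarrow> 'a"
    have "sat ?e \<phi> \<longleftrightarrow> b \<noteq> 0 \<and> (\<exists>x y. (y \<noteq> 0 \<and> Fraction_Field.Fract x y \<in> ?S) \<and>
        (y * b \<noteq> 0 \<and> Fraction_Field.Fract (x * a) (y * b) \<in> ?S) \<and>
        (x * c2 + c1 * y \<noteq> 0 \<and> Fraction_Field.Fract ((c2 + c1) * y) (x * c2 + c1 * y) \<in> ?S))"
      unfolding \<phi>_def sat.simps
      by (subst sat_formula, force simp: tN_def tD_def)+ (simp add: tN_def tD_def)
    also have "\<dots> \<longleftrightarrow> b \<noteq> 0 \<and> Fraction_Field.Fract a b \<in> V"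
    proof (cases "b = 0")
      case False
      have "(Fraction_Field.Fract x y \<in> ?S \<and> Fraction_Field.Fract x y * Fraction_Field.Fract a b \<in> ?S \<and>
          Fraction_Field.Fract x y + Fraction_Field.Fract c1 c2 \<noteq> 0 \<and>
          (1 + Fraction_Field.Fract c1 c2) / (Fraction_Field.Fract x y + Fraction_Field.Fract c1 c2) \<in> ?S)
        \<longleftrightarrow> ((y \<noteq> 0 \<and> Fraction_Field.Fract x y \<in> ?S) \<and>
          (y * b \<noteq> 0 \<and> Fraction_Field.Fract (x * a) (y * b) \<in> ?S) \<and>
          (x * c2 + c1 * y \<noteq> 0 \<and> Fraction_Field.Fract ((c2 + c1) * y) (x * c2 + c1 * y) \<in> ?S))"
        if "y \<noteq> 0" for x y
        using that False by (simp only: multiplier_Fract[OF that assms(2)] mult_fract) simp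
      then show ?thesis
        unfolding V ex_fract_iff using False by blast
    qed simp
    finally show "(b \<noteq> 0 \<and> Fraction_Field.Fract a b \<in> V) \<longleftrightarrow> sat ?e \<phi>"
      by simp
  qed
qed

theorem frac_definable_min_valuation_ring:
  assumes br: "breadth_le TYPE('a::idom) n" and "n \<ge> 1"
    and V: "V \<in> (min_valuation_rings :: 'a fract set set)"
  shows "frac_definable V"
proof -
  let ?Ms = "min_valuation_rings :: 'a fract set set"
  have finite: "finite ?Ms"
    by (rule finite_min_valuation_rings[OF br \<open>n \<ge> 1\<close>])
  have "\<forall>W\<in>?Ms - {V}. valuation_ring W \<and> \<not> V \<subseteq> W \<and> \<not> W \<subseteq> V"
    using V min_valuation_ringsD(1) min_valuation_rings_incomparable by blast
  then obtain c where c: "c \<in> nonunits V" "\<forall>W\<in>?Ms - {V}. c \<notin> W"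
    using exists_nonunit_notin_incomparable[OF min_valuation_ringsD(1)[OF V] finite_Diff[OF finite]]
    by blast
  obtain c1 c2 where "c2 \<noteq> 0" "c = Fraction_Field.Fract c1 c2"
    by (cases c)
  moreover have "z \<in> V \<longleftrightarrow> (\<exists>s. s \<in> \<Inter>?Ms \<and> s * z \<in> \<Inter>?Ms \<and> s + c \<noteq> 0 \<and> (1 + c) / (s + c) \<in> \<Inter>?Ms)"
    for z
    using c(2) by (intro in_valuation_ring_iff_multiplier[OF finite min_valuation_ringsD(1) V c(1)]) auto
  ultimately show ?thesis
    unfolding integral_closure_eq_Inter_min_valuation_rings[symmetric]
    by (intro frac_definable_by_multiplier[OF br]) auto
qed

theorem lemma4p3:
  fixes n :: nat
  assumes "n \<ge> 1"
    and "breadth_le TYPE('a::idom) n"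
  shows "\<exists>Os :: 'a fract set list.
           (\<forall>V\<in>set Os. valuation_ring V) \<and>
           integral_closure TYPE('a) = (\<Inter>V\<in>set Os. V) \<and>
           frac_definable (integral_closure TYPE('a)) \<and>
           (\<forall>V\<in>set Os. frac_definable V)"
proof -
  obtain Os where Os: "set Os = (min_valuation_rings :: 'a fract set set)"
    using finite_list[OF finite_min_valuation_rings[OF assms(2,1)]] by blast
  show ?thesis
  proof (intro exI[of _ Os] conjI ballI)
    fix V assume "V \<in> set Os"
    then show "valuation_ring V" and "frac_definable V"
      using Os min_valuation_ringsD(1) frac_definable_min_valuation_ring[OF assms(2,1)] by auto
  next
    show "integral_closure TYPE('a) = (\<Inter>V\<in>set Os. V)"
      using integral_closure_eq_Inter_min_valuation_rings Os by simp
    show "frac_definable (integral_closure TYPE('a))"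
      using frac_definable_integral_closure[OF assms(2)] .
  qed
qed

end
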